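(* Let $k\ge0$ and $L\subseteq\mathrm{iiPoms}_{\le k}$. For $P\in\mathrm{iiPoms}_{\le k}$ let $P\backslash L=\{Q\in\mathrm{iiPoms}_{\le k}\mid S_Q=T_P,\ P*Q\in L\}$ and $\mathrm{suff}(L)=\{P\backslash L\mid P\in\mathrm{iiPoms}_{\le k}\}$. Then $\mathrm{suff}(L)$ is an $\mathrm{iiPoms}_{\le k}$-module via $\mathrm{src}(P\backslash L)=S_P$, $\mathrm{tgt}(P\backslash L)=T_P$, $(P\backslash L)\cdot Q=(P*Q)\backslash L$, and the triple $(\mathrm{suff}(L),J,\varphi)$ with $J=\{P\backslash L\mid P\in L\}$ and $\varphi(P)=P\backslash L$ recognizes $L$, i.e. $\varphi$ is a module homomorphism and $L=\varphi^{-1}(J)$. Moreover, for any $\mathrm{iiPoms}_{\le k}$-module $M$, subset $K\subseteq M$ and surjective module homomorphism $\psi:\mathrm{iiPoms}_{\le k}\to M$ with $L=\psi^{-1}(K)$, there is a module homomorphism $f:M\to\mathrm{suff}(L)$ such that $f(M)=\mathrm{suff}(L)$, $f(K)=J$ and $f\circ\psi=\varphi$.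
   Context: Fix a finite alphabet $\Sigma$. Pomsets $(P,<,\dashrightarrow,\lambda,S,T)$: $P$ finite, $<$ a strict partial interval order, $\dashrightarrow$ acyclic relating (in one direction) distinct $<$-incomparable elements, $\lambda:P\to\Sigma$, $S$/$T$ sets of $<$-minimal/maximal elements viewed as conclists (finite totally ordered labelled sets), up to isomorphism. $\mathrm{iiPoms}$ is the category with objects conclists, morphisms $U\to V$ the pomsets with source $U$ and target $V$, composition the gluing $P*Q$ (identify $T_P$ with $S_Q$; precedence $<_P\cup<_Q\cup(P\setminus T_P)\times(Q\setminus S_Q)$; event orders and labels united; source $S_P$, target $T_Q$), identities $\mathrm{id}_U=(U,\emptyset,\dashrightarrow,\lambda,U,U)$. $\mathrm{iiPoms}_{\le k}$: pomsets whose $<$-antichains have size $\le k$. A $\mathcal C$-module ($\mathcal C$ small category) is a set $M$ with $\mathrm{src},\mathrm{tgt}:M\to\mathrm{Ob}(\mathcal C)$ and actions $M(U,V)\times\mathcal C(V,W)\to M(U,W)$ ($M(U,V)=\mathrm{src}^{-1}(U)\cap\mathrm{tgt}^{-1}(V)$), $(m,\alpha)\mapsto m\cdot\alpha$, with $m\cdot\mathrm{id}_V=m$ and $(m\cdot\alpha)\cdot\beta=m\cdot(\alpha\beta)$ (composition written diagrammatically). A homomorphism preserves $\mathrm{src},\mathrm{tgt}$ and commutes with the action. $\mathrm{iiPoms}_{\le k}$ is a module over itself via $\mathrm{src}(P)=S_P$, $\mathrm{tgt}(P)=T_P$, $P\cdot Q=P*Q$. An element $P\backslash L$ of $\mathrm{suff}(L)$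 is understood as carrying its interfaces $(S_P,T_P)$, so that $\mathrm{src},\mathrm{tgt}$ are well defined. *)

theory Defs
  imports Main
begin

text \<open>A concrete pomset with interfaces over events from nat.
  prec is the precedence order, evo the event order, lab the labelling,
  srcI / tgtI the source and target interfaces.\<close>

record 'a ipom =
  ev   :: "nat set"
  prec :: "(nat \<times> nat) set"
  evo  :: "(nat \<times> nat) set"
  lab  :: "nat \<Rightarrow> 'a"
  srcI :: "nat set"
  tgtI :: "nat set"

definition wf_ipom :: "('a, 'b) ipom_scheme \<Rightarrow> bool" where
  "wf_ipom P \<longleftrightarrow>
     finite (ev P) \<and>
     prec P \<subseteq> ev P \<times> ev P \<and> evo P \<subseteq> ev P \<times> ev P \<and>
     (\<forall>x. (x, x) \<notin> prec P) \<and> trans (prec P) \<and>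
     (\<forall>w x y z. (w, x) \<in> prec P \<longrightarrow> (y, z) \<in> prec P \<longrightarrow>
                 (w, z) \<in> prec P \<or> (y, x) \<in> prec P) \<and>
     acyclic (evo P) \<and>
     (\<forall>x y. (x, y) \<in> evo P \<longrightarrow> (x, y) \<notin> prec P \<and> (y, x) \<notin> prec P) \<and>
     (\<forall>x\<in>ev P. \<forall>y\<in>ev P. x \<noteq> y \<longrightarrow>
        (x, y) \<in> prec P \<or> (y, x) \<in> prec P \<or> (x, y) \<in> evo P \<or> (y, x) \<in> evo P) \<and>
     srcI P \<subseteq> ev P \<and> tgtI P \<subseteq> ev P \<and>
     (\<forall>x\<in>srcI P. \<forall>y. (y, x) \<notin> prec P) \<and>
     (\<forall>x\<in>tgtI P. \<forall>y. (x, y) \<notin> prec P)"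

definition width_le :: "nat \<Rightarrow> 'a ipom \<Rightarrow> bool" where
  "width_le k P \<longleftrightarrow>
     (\<forall>A. A \<subseteq> ev P \<longrightarrow> (\<forall>x\<in>A. \<forall>y\<in>A. (x, y) \<notin> prec P) \<longrightarrow> card A \<le> k)"

definition ipom_iso :: "'a ipom \<Rightarrow> 'a ipom \<Rightarrow> bool" where
  "ipom_iso P Q \<longleftrightarrow> (\<exists>f. bij_betw f (ev P) (ev Q) \<and>
     (\<forall>x\<in>ev P. \<forall>y\<in>ev P. ((x, y) \<in> prec P \<longleftrightarrow> (f x, f y) \<in> prec Q)) \<and>
     (\<forall>x\<in>ev P. \<forall>y\<in>ev P. ((x, y) \<in> evo P \<longleftrightarrow> (f x, f y) \<in> evo Q)) \<and>
     (\<forall>x\<in>ev P. lab Q (f x) = lab P x) \<and>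
     f ` srcI P = srcI Q \<and> f ` tgtI P = tgtI Q)"

text \<open>Pomsets (up to isomorphism) are isomorphism classes of well-formed representatives.\<close>
type_synonym 'a pom = "'a ipom set"

definition cls :: "'a ipom \<Rightarrow> 'a pom" where
  "cls P = {Q. wf_ipom Q \<and> ipom_iso P Q}"

definition rep :: "'a pom \<Rightarrow> 'a ipom" where
  "rep X = (SOME P. P \<in> X)"

definition iiPoms :: "nat \<Rightarrow> 'a pom set" where
  "iiPoms k = {cls P | P. wf_ipom P \<and> width_le k P}"

definition is_conc :: "'a ipom \<Rightarrow> bool" where
  "is_conc U \<longleftrightarrow> prec U = {} \<and> srcI U = ev U \<and> tgtI U = ev U"

definition iiObj :: "nat \<Rightarrow> 'a pom set" where
  "iiObj k = {cls U | U. wf_ipom U \<and> is_conc U \<and> card (ev U) \<le> k}"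

definition conc_of :: "'a ipom \<Rightarrow> nat set \<Rightarrow> 'a ipom" where
  "conc_of P A = \<lparr>ev = A, prec = {}, evo = evo P \<inter> (A \<times> A), lab = lab P,
                  srcI = A, tgtI = A\<rparr>"

definition pomS :: "'a pom \<Rightarrow> 'a pom" where
  "pomS X = cls (conc_of (rep X) (srcI (rep X)))"

definition pomT :: "'a pom \<Rightarrow> 'a pom" where
  "pomT X = cls (conc_of (rep X) (tgtI (rep X)))"

text \<open>Identity on a conclist U: the pomset (U, empty, evo, lab, U, U), which in this
  encoding is the very same class as the object U.\<close>
definition idP :: "'a pom \<Rightarrow> 'a pom" where
  "idP U = U"

text \<open>R is a gluing of P and Q: disjoint copies of P and Q with T_P identified with S_Q
  along an isomorphism of conclists.\<close>
definition is_glue :: "'a ipom \<Rightarrow> 'a ipom \<Rightarrow> 'a ipom \<Rightarrow> bool" where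
  "is_glue P Q R \<longleftrightarrow> (\<exists>f g. inj_on f (ev P) \<and> inj_on g (ev Q) \<and>
     ev R = f ` ev P \<union> g ` ev Q \<and>
     f ` ev P \<inter> g ` ev Q = f ` tgtI P \<and> g ` srcI Q = f ` tgtI P \<and>
     (\<forall>x\<in>tgtI P. \<forall>x'\<in>tgtI P. \<forall>y\<in>srcI Q. \<forall>y'\<in>srcI Q.
        f x = g y \<longrightarrow> f x' = g y' \<longrightarrow> ((x, x') \<in> evo P \<longleftrightarrow> (y, y') \<in> evo Q)) \<and>
     prec R = map_prod f f ` prec P \<union> map_prod g g ` prec Q \<union>
              (f ` (ev P - tgtI P)) \<times> (g ` (ev Q - srcI Q)) \<and>
     evo R = map_prod f f ` evo P \<union> map_prod g g ` evo Q \<and>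
     (\<forall>x\<in>ev P. lab R (f x) = lab P x) \<and> (\<forall>y\<in>ev Q. lab R (g y) = lab Q y) \<and>
     srcI R = f ` srcI P \<and> tgtI R = g ` tgtI Q)"

definition glue :: "'a ipom \<Rightarrow> 'a ipom \<Rightarrow> 'a ipom" where
  "glue P Q = (SOME R. is_glue P Q R)"

definition pcomp :: "'a pom \<Rightarrow> 'a pom \<Rightarrow> 'a pom" where
  "pcomp X Y = cls (glue (rep X) (rep Y))"

text \<open>Category given by objects Ob, morphisms Mor, domain/codomain, diagrammatic
  composition cmp and identities idm.\<close>
definition module_over ::
  "'o set \<Rightarrow> 'c set \<Rightarrow> ('c \<Rightarrow> 'o) \<Rightarrow> ('c \<Rightarrow> 'o) \<Rightarrow> ('c \<Rightarrow> 'c \<Rightarrow> 'c) \<Rightarrow> ('o \<Rightarrow> 'c) \<Rightarrow>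
   'm set \<Rightarrow> ('m \<Rightarrow> 'o) \<Rightarrow> ('m \<Rightarrow> 'o) \<Rightarrow> ('m \<Rightarrow> 'c \<Rightarrow> 'm) \<Rightarrow> bool" where
  "module_over Ob Mor dm cd cmp idm M s t act \<longleftrightarrow>
     (\<forall>m\<in>M. s m \<in> Ob \<and> t m \<in> Ob) \<and>
     (\<forall>m\<in>M. \<forall>\<alpha>\<in>Mor. dm \<alpha> = t m \<longrightarrow>
        act m \<alpha> \<in> M \<and> s (act m \<alpha>) = s m \<and> t (act m \<alpha>) = cd \<alpha>) \<and>
     (\<forall>m\<in>M. act m (idm (t m)) = m) \<and>
     (\<forall>m\<in>M. \<forall>\<alpha>\<in>Mor. \<forall>\<beta>\<in>Mor. dm \<alpha> = t m \<longrightarrow> dm \<beta> = cd \<alpha> \<longrightarrow>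
        act (act m \<alpha>) \<beta> = act m (cmp \<alpha> \<beta>))"

definition module_hom ::
  "'c set \<Rightarrow> ('c \<Rightarrow> 'o) \<Rightarrow>
   'm set \<Rightarrow> ('m \<Rightarrow> 'o) \<Rightarrow> ('m \<Rightarrow> 'o) \<Rightarrow> ('m \<Rightarrow> 'c \<Rightarrow> 'm) \<Rightarrow>
   'n set \<Rightarrow> ('n \<Rightarrow> 'o) \<Rightarrow> ('n \<Rightarrow> 'o) \<Rightarrow> ('n \<Rightarrow> 'c \<Rightarrow> 'n) \<Rightarrow> ('m \<Rightarrow> 'n) \<Rightarrow> bool" where
  "module_hom Mor dm M s t act N s' t' act' h \<longleftrightarrow>
     (\<forall>m\<in>M. h m \<in> N \<and> s' (h m) = s m \<and> t' (h m) = t m) \<and>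
     (\<forall>m\<in>M. \<forall>\<alpha>\<in>Mor. dm \<alpha> = t m \<longrightarrow> h (act m \<alpha>) = act' (h m) \<alpha>)"

text \<open>P \ L, carrying its interfaces (S_P, T_P).\<close>
definition res :: "nat \<Rightarrow> 'a pom set \<Rightarrow> 'a pom \<Rightarrow> 'a pom \<times> 'a pom \<times> 'a pom set" where
  "res k L P = (pomS P, pomT P, {Q \<in> iiPoms k. pomS Q = pomT P \<and> pcomp P Q \<in> L})"

definition suff :: "nat \<Rightarrow> 'a pom set \<Rightarrow> ('a pom \<times> 'a pom \<times> 'a pom set) set" where
  "suff k L = res k L ` iiPoms k"

definition suff_src :: "'a pom \<times> 'a pom \<times> 'a pom set \<Rightarrow> 'a pom" where
  "suff_src m = fst m"

definition suff_tgt :: "'a pom \<times> 'a pom \<times> 'a pom set \<Rightarrow> 'a pom" where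
  "suff_tgt m = fst (snd m)"

definition suff_act :: "nat \<Rightarrow> 'a pom set \<Rightarrow> 'a pom \<times> 'a pom \<times> 'a pom set \<Rightarrow> 'a pom
                        \<Rightarrow> 'a pom \<times> 'a pom \<times> 'a pom set" where
  "suff_act k L m Q = res k L (pcomp (SOME P. P \<in> iiPoms k \<and> res k L P = m) Q)"

end

theory Submission
  imports Defs
begin

text \<open>Composition of pomsets is defined through representatives and a gluing chosen by Hilbert's
  operator, so everything rests on gluing being well defined and associative on isomorphism
  classes. A gluing of \<open>P\<close> and \<open>Q\<close> exists as soon as \<open>T\<^sub>P\<close> and \<open>S\<^sub>Q\<close> are isomorphic, it is
  unique up to isomorphism because conclists are rigid (an event of a conclist is determined by its
  rank in the event order), and it does not change when \<open>P\<close> and \<open>Q\<close> are replaced by isomorphic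
  copies. Associativity follows by cutting \<open>(P * Q) * Z\<close> into a gluing of \<open>P\<close> with its part
  \<open>Q * Z\<close>; gluing with \<open>T\<^sub>P\<close> on the right does nothing.

  Given associativity, \<open>(P * A) \ L\<close> is determined by \<open>P \ L\<close>, so the residuals form a module
  and \<open>P \<mapsto> P \ L\<close> is a homomorphism. It recognizes \<open>L\<close> because \<open>P \<in> L\<close> iff
  \<open>T\<^sub>P \<in> P \ L\<close>, and it factors through every surjective homomorphism \<open>\<psi>\<close> recognizing \<open>L\<close>,
  since \<open>\<psi> P\<^sub>1 = \<psi> P\<^sub>2\<close> forces \<open>P\<^sub>1 \ L = P\<^sub>2 \ L\<close>.\<close>

section \<open>Isomorphism of representatives\<close>

definition ipom_iso_via :: "'a ipom \<Rightarrow> 'a ipom \<Rightarrow> (nat \<Rightarrow> nat) \<Rightarrow> bool" where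
  "ipom_iso_via P Q f \<longleftrightarrow> bij_betw f (ev P) (ev Q) \<and>
     (\<forall>x\<in>ev P. \<forall>y\<in>ev P. ((x, y) \<in> prec P \<longleftrightarrow> (f x, f y) \<in> prec Q)) \<and>
     (\<forall>x\<in>ev P. \<forall>y\<in>ev P. ((x, y) \<in> evo P \<longleftrightarrow> (f x, f y) \<in> evo Q)) \<and>
     (\<forall>x\<in>ev P. lab Q (f x) = lab P x) \<and>
     f ` srcI P = srcI Q \<and> f ` tgtI P = tgtI Q"

lemma ipom_iso_viaD:
  assumes "ipom_iso_via P Q f"
  shows "bij_betw f (ev P) (ev Q)"
    "\<And>x y. x \<in> ev P \<Longrightarrow> y \<in> ev P \<Longrightarrow> (x, y) \<in> prec P \<longleftrightarrow> (f x, f y) \<in> prec Q"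
    "\<And>x y. x \<in> ev P \<Longrightarrow> y \<in> ev P \<Longrightarrow> (x, y) \<in> evo P \<longleftrightarrow> (f x, f y) \<in> evo Q"
    "\<And>x. x \<in> ev P \<Longrightarrow> lab Q (f x) = lab P x"
    "f ` srcI P = srcI Q" "f ` tgtI P = tgtI Q"
  using assms unfolding ipom_iso_via_def by simp_all

lemma ipom_iso_viaI:
  assumes "bij_betw f (ev P) (ev Q)"
    and "\<And>x y. x \<in> ev P \<Longrightarrow> y \<in> ev P \<Longrightarrow> (x, y) \<in> prec P \<longleftrightarrow> (f x, f y) \<in> prec Q"
    and "\<And>x y. x \<in> ev P \<Longrightarrow> y \<in> ev P \<Longrightarrow> (x, y) \<in> evo P \<longleftrightarrow> (f x, f y) \<in> evo Q"
    and "\<And>x. x \<in> ev P \<Longrightarrow> lab Q (f x) = lab P x"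
    and "f ` srcI P = srcI Q" "f ` tgtI P = tgtI Q"
  shows "ipom_iso_via P Q f"
  unfolding ipom_iso_via_def using assms by simp

lemma ipom_iso_iff_via: "ipom_iso P Q \<longleftrightarrow> (\<exists>f. ipom_iso_via P Q f)"
  unfolding ipom_iso_def ipom_iso_via_def by (rule refl)

lemma ipom_iso_refl: "ipom_iso P P"
  unfolding ipom_iso_def by (rule exI[of _ id]) auto

lemma ipom_iso_via_inverse:
  assumes iso: "ipom_iso_via P Q f" and src: "srcI P \<subseteq> ev P" and tgt: "tgtI P \<subseteq> ev P"
  shows "ipom_iso_via Q P (inv_into (ev P) f)"
proof -
  note iso_props = ipom_iso_viaD[OF iso]
  define g where "g = inv_into (ev P) f"
  have bij: "bij_betw g (ev Q) (ev P)" unfolding g_def by (rule bij_betw_inv_into[OF iso_props(1)])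
  have fg: "f (g y) = y" if "y \<in> ev Q" for y
    unfolding g_def using iso_props(1) that by (rule bij_betw_inv_into_right)
  have gf: "g (f x) = x" if "x \<in> ev P" for x
    unfolding g_def using iso_props(1) that by (rule bij_betw_inv_into_left)
  have g_in: "g y \<in> ev P" if "y \<in> ev Q" for y using bij that by (rule bij_betw_apply)
  have g_image: "g ` f ` A = A" if "A \<subseteq> ev P" for A
    using that gf by (force simp: image_image)
  have "ipom_iso_via Q P g"
  proof (rule ipom_iso_viaI[OF bij])
    show "(x, y) \<in> prec Q \<longleftrightarrow> (g x, g y) \<in> prec P" "(x, y) \<in> evo Q \<longleftrightarrow> (g x, g y) \<in> evo P"
      if "x \<in> ev Q" "y \<in> ev Q" for x y
      using iso_props(2,3)[OF g_in g_in, OF that] by (simp_all add: fg that)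
    show "lab P (g y) = lab Q y" if "y \<in> ev Q" for y
      using iso_props(4)[OF g_in, OF that] by (simp add: fg that)
    show "g ` srcI Q = srcI P" "g ` tgtI Q = tgtI P"
      using g_image[OF src] g_image[OF tgt] iso_props(5,6) by simp_all
  qed
  then show ?thesis unfolding g_def .
qed

lemma ipom_iso_sym: "wf_ipom P \<Longrightarrow> ipom_iso P Q \<Longrightarrow> ipom_iso Q P"
  unfolding ipom_iso_iff_via wf_ipom_def by (blast dest: ipom_iso_via_inverse)

lemma ipom_iso_via_comp:
  assumes "ipom_iso_via P Q f" "ipom_iso_via Q R g"
  shows "ipom_iso_via P R (g \<circ> f)"
proof -
  note f_props = ipom_iso_viaD[OF assms(1)] and g_props = ipom_iso_viaD[OF assms(2)]
  have f_in: "f x \<in> ev Q" if "x \<in> ev P" for x using f_props(1) that by (rule bij_betw_apply)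
  show ?thesis
  proof (rule ipom_iso_viaI[OF bij_betw_trans[OF f_props(1) g_props(1)]])
    show "(g \<circ> f) ` srcI P = srcI R" "(g \<circ> f) ` tgtI P = tgtI R"
      by (simp_all only: image_comp[symmetric] f_props(5,6) g_props(5,6))
  qed (simp_all add: f_props g_props f_in)
qed

lemma ipom_iso_trans: "ipom_iso P Q \<Longrightarrow> ipom_iso Q R \<Longrightarrow> ipom_iso P R"
  unfolding ipom_iso_iff_via by (blast intro: ipom_iso_via_comp)

lemma cls_self: "wf_ipom P \<Longrightarrow> P \<in> cls P"
  unfolding cls_def by (simp add: ipom_iso_refl)

lemma cls_eq_iff:
  assumes "wf_ipom P" "wf_ipom Q"
  shows "cls P = cls Q \<longleftrightarrow> ipom_iso P Q"
proof
  show "cls P = cls Q \<Longrightarrow> ipom_iso P Q"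
    using cls_self[OF assms(2)] unfolding cls_def by blast
  show "ipom_iso P Q \<Longrightarrow> cls P = cls Q"
    using ipom_iso_sym[OF assms(1)] unfolding cls_def by (blast intro: ipom_iso_trans)
qed

lemma rep_cls: "wf_ipom P \<Longrightarrow> wf_ipom (rep (cls P)) \<and> ipom_iso P (rep (cls P))"
  using someI[of "\<lambda>Q. Q \<in> cls P", OF cls_self] unfolding rep_def cls_def by simp

lemma cls_rep_cls: "wf_ipom P \<Longrightarrow> cls (rep (cls P)) = cls P"
  using rep_cls cls_eq_iff by metis

lemma wf_ipomD:
  assumes "wf_ipom P"
  shows "finite (ev P)" "prec P \<subseteq> ev P \<times> ev P" "evo P \<subseteq> ev P \<times> ev P"
    "\<forall>x. (x, x) \<notin> prec P" "trans (prec P)"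
    "\<forall>w x y z. (w, x) \<in> prec P \<longrightarrow> (y, z) \<in> prec P \<longrightarrow> (w, z) \<in> prec P \<or> (y, x) \<in> prec P"
    "acyclic (evo P)" "\<forall>x y. (x, y) \<in> evo P \<longrightarrow> (x, y) \<notin> prec P \<and> (y, x) \<notin> prec P"
    "\<forall>x\<in>ev P. \<forall>y\<in>ev P. x \<noteq> y \<longrightarrow>
        (x, y) \<in> prec P \<or> (y, x) \<in> prec P \<or> (x, y) \<in> evo P \<or> (y, x) \<in> evo P"
    "srcI P \<subseteq> ev P" "tgtI P \<subseteq> ev P"
    "\<forall>x\<in>srcI P. \<forall>y. (y, x) \<notin> prec P" "\<forall>x\<in>tgtI P. \<forall>y. (x, y) \<notin> prec P"
  using assms unfolding wf_ipom_def by simp_all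

lemma wf_ipomI:
  assumes "finite (ev P)" "prec P \<subseteq> ev P \<times> ev P" "evo P \<subseteq> ev P \<times> ev P"
    and "\<And>x. (x, x) \<notin> prec P"
    and "\<And>x y z. (x, y) \<in> prec P \<Longrightarrow> (y, z) \<in> prec P \<Longrightarrow> (x, z) \<in> prec P"
    and "\<And>w x y z. (w, x) \<in> prec P \<Longrightarrow> (y, z) \<in> prec P \<Longrightarrow> (w, z) \<in> prec P \<or> (y, x) \<in> prec P"
    and "acyclic (evo P)"
    and "\<And>x y. (x, y) \<in> evo P \<Longrightarrow> (x, y) \<notin> prec P \<and> (y, x) \<notin> prec P"
    and "\<And>x y. x \<in> ev P \<Longrightarrow> y \<in> ev P \<Longrightarrow> x \<noteq> y \<Longrightarrow>
        (x, y) \<in> prec P \<or> (y, x) \<in> prec P \<or> (x, y) \<in> evo P \<or> (y, x) \<in> evo P"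
    and "srcI P \<subseteq> ev P" "tgtI P \<subseteq> ev P"
    and "\<And>x y. x \<in> srcI P \<Longrightarrow> (y, x) \<notin> prec P"
    and "\<And>x y. x \<in> tgtI P \<Longrightarrow> (x, y) \<notin> prec P"
  shows "wf_ipom P"
  unfolding wf_ipom_def by (intro conjI allI ballI impI transI) (simp_all add: assms)

context
  fixes P :: "'a ipom"
  assumes wf: "wf_ipom P"
begin

lemma wf_ipom_finite: "finite (ev P)"
  using wf_ipomD[OF wf] by blast

lemma wf_ipom_prec_ev: "(x, y) \<in> prec P \<Longrightarrow> x \<in> ev P \<and> y \<in> ev P"
  using wf_ipomD[OF wf] by blast

lemma wf_ipom_evo_ev: "(x, y) \<in> evo P \<Longrightarrow> x \<in> ev P \<and> y \<in> ev P"
  using wf_ipomD[OF wf] by blast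

lemma wf_ipom_prec_irrefl: "(x, x) \<notin> prec P"
  using wf_ipomD[OF wf] by blast

lemma wf_ipom_prec_trans: "(x, y) \<in> prec P \<Longrightarrow> (y, z) \<in> prec P \<Longrightarrow> (x, z) \<in> prec P"
  using wf_ipomD(5)[OF wf] by (meson transE)

lemma wf_ipom_interval:
  "(w, x) \<in> prec P \<Longrightarrow> (y, z) \<in> prec P \<Longrightarrow> (w, z) \<in> prec P \<or> (y, x) \<in> prec P"
  using wf_ipomD[OF wf] by blast

lemma wf_ipom_evo_acyclic: "acyclic (evo P)"
  using wf_ipomD[OF wf] by blast

lemma wf_ipom_evo_not_prec: "(x, y) \<in> evo P \<Longrightarrow> (x, y) \<notin> prec P \<and> (y, x) \<notin> prec P"
  using wf_ipomD[OF wf] by blast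

lemma wf_ipom_connex:
  "x \<in> ev P \<Longrightarrow> y \<in> ev P \<Longrightarrow> x \<noteq> y \<Longrightarrow>
     (x, y) \<in> prec P \<or> (y, x) \<in> prec P \<or> (x, y) \<in> evo P \<or> (y, x) \<in> evo P"
  using wf_ipomD[OF wf] by blast

lemma wf_ipom_src_ev: "srcI P \<subseteq> ev P"
  using wf_ipomD[OF wf] by blast

lemma wf_ipom_tgt_ev: "tgtI P \<subseteq> ev P"
  using wf_ipomD[OF wf] by blast

lemma wf_ipom_src_minimal: "x \<in> srcI P \<Longrightarrow> (y, x) \<notin> prec P"
  using wf_ipomD[OF wf] by blast

lemma wf_ipom_tgt_maximal: "x \<in> tgtI P \<Longrightarrow> (x, y) \<notin> prec P"
  using wf_ipomD[OF wf] by blast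

lemma wf_ipom_evo_irrefl: "(x, x) \<notin> evo P"
  using wf_ipom_evo_acyclic unfolding acyclic_def by blast

lemma wf_ipom_evo_no_2cycle: "(x, y) \<in> evo P \<Longrightarrow> (y, x) \<notin> evo P"
  using wf_ipom_evo_acyclic unfolding acyclic_def by (meson trancl.r_into_trancl trancl_into_trancl)

lemma wf_ipom_evo_no_3cycle: "(x, y) \<in> evo P \<Longrightarrow> (y, z) \<in> evo P \<Longrightarrow> (z, x) \<notin> evo P"
  using wf_ipom_evo_acyclic unfolding acyclic_def by (meson trancl.r_into_trancl trancl_into_trancl)

end

section \<open>Interfaces as conclists\<close>

definition src_conc :: "'a ipom \<Rightarrow> 'a ipom" where
  "src_conc P = conc_of P (srcI P)"

definition tgt_conc :: "'a ipom \<Rightarrow> 'a ipom" where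
  "tgt_conc P = conc_of P (tgtI P)"

lemma conc_of_simps [simp]:
  "ev (conc_of P A) = A" "prec (conc_of P A) = {}" "evo (conc_of P A) = evo P \<inter> A \<times> A"
  "lab (conc_of P A) = lab P" "srcI (conc_of P A) = A" "tgtI (conc_of P A) = A"
  unfolding conc_of_def by simp_all

lemma wf_conc_of:
  assumes wf: "wf_ipom P" and A: "A \<subseteq> ev P" and antichain: "\<forall>x\<in>A. \<forall>y\<in>A. (x, y) \<notin> prec P"
  shows "wf_ipom (conc_of P A)"
proof (rule wf_ipomI)
  show "finite (ev (conc_of P A))" using A wf_ipom_finite[OF wf] finite_subset by auto
  show "acyclic (evo (conc_of P A))" by (rule acyclic_subset[OF wf_ipom_evo_acyclic[OF wf]]) auto
  show "(x, y) \<in> prec (conc_of P A) \<or> (y, x) \<in> prec (conc_of P A) \<or>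
      (x, y) \<in> evo (conc_of P A) \<or> (y, x) \<in> evo (conc_of P A)"
    if "x \<in> ev (conc_of P A)" "y \<in> ev (conc_of P A)" "x \<noteq> y" for x y
    using wf_ipom_connex[OF wf, of x y] A antichain that by auto
qed auto

lemma wf_src_conc: "wf_ipom P \<Longrightarrow> wf_ipom (src_conc P)"
  unfolding src_conc_def using wf_ipom_src_minimal by (blast intro: wf_conc_of[OF _ wf_ipom_src_ev])

lemma wf_tgt_conc: "wf_ipom P \<Longrightarrow> wf_ipom (tgt_conc P)"
  unfolding tgt_conc_def using wf_ipom_tgt_maximal by (blast intro: wf_conc_of[OF _ wf_ipom_tgt_ev])

lemma src_conc_tgt_conc [simp]: "src_conc (tgt_conc P) = tgt_conc P"
  unfolding src_conc_def tgt_conc_def conc_of_def by auto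

lemma ipom_iso_via_conc_ofI:
  assumes "inj_on f A"
    and "\<And>x y. x \<in> A \<Longrightarrow> y \<in> A \<Longrightarrow> (x, y) \<in> evo P \<longleftrightarrow> (f x, f y) \<in> evo Q"
    and "\<And>x. x \<in> A \<Longrightarrow> lab Q (f x) = lab P x"
  shows "ipom_iso_via (conc_of P A) (conc_of Q (f ` A)) f"
  using assms unfolding ipom_iso_via_def conc_of_simps by (auto simp: bij_betw_def)

lemma ipom_iso_via_conc_of:
  assumes iso: "ipom_iso_via P Q f" and A: "A \<subseteq> ev P"
  shows "ipom_iso_via (conc_of P A) (conc_of Q (f ` A)) f"
proof (rule ipom_iso_via_conc_ofI)
  show "inj_on f A"
    using ipom_iso_viaD(1)[OF iso] A unfolding bij_betw_def by (blast intro: inj_on_subset)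
qed (use ipom_iso_viaD(3,4)[OF iso] A in auto)

lemma ipom_iso_src_conc:
  assumes "wf_ipom P" "ipom_iso P Q"
  shows "ipom_iso (src_conc P) (src_conc Q)"
proof -
  obtain f where f: "ipom_iso_via P Q f" using assms(2) ipom_iso_iff_via by blast
  then have "f ` srcI P = srcI Q" by (rule ipom_iso_viaD)
  then show ?thesis
    using ipom_iso_via_conc_of[OF f wf_ipom_src_ev[OF assms(1)]]
    unfolding ipom_iso_iff_via src_conc_def by auto
qed

lemma ipom_iso_tgt_conc:
  assumes "wf_ipom P" "ipom_iso P Q"
  shows "ipom_iso (tgt_conc P) (tgt_conc Q)"
proof -
  obtain f where f: "ipom_iso_via P Q f" using assms(2) ipom_iso_iff_via by blast
  then have "f ` tgtI P = tgtI Q" by (rule ipom_iso_viaD)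
  then show ?thesis
    using ipom_iso_via_conc_of[OF f wf_ipom_tgt_ev[OF assms(1)]]
    unfolding ipom_iso_iff_via tgt_conc_def by auto
qed

lemma pomS_cls:
  assumes "wf_ipom P"
  shows "pomS (cls P) = cls (src_conc P)"
proof -
  have r: "wf_ipom (rep (cls P))" "ipom_iso P (rep (cls P))" using rep_cls[OF assms] by blast+
  have "ipom_iso (src_conc P) (src_conc (rep (cls P)))" by (rule ipom_iso_src_conc[OF assms r(2)])
  then have "cls (src_conc P) = cls (src_conc (rep (cls P)))"
    using cls_eq_iff[OF wf_src_conc[OF assms] wf_src_conc[OF r(1)]] by blast
  then show ?thesis unfolding pomS_def src_conc_def by simp
qed

lemma pomT_cls:
  assumes "wf_ipom P"
  shows "pomT (cls P) = cls (tgt_conc P)"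
proof -
  have r: "wf_ipom (rep (cls P))" "ipom_iso P (rep (cls P))" using rep_cls[OF assms] by blast+
  have "ipom_iso (tgt_conc P) (tgt_conc (rep (cls P)))" by (rule ipom_iso_tgt_conc[OF assms r(2)])
  then have "cls (tgt_conc P) = cls (tgt_conc (rep (cls P)))"
    using cls_eq_iff[OF wf_tgt_conc[OF assms] wf_tgt_conc[OF r(1)]] by blast
  then show ?thesis unfolding pomT_def tgt_conc_def by simp
qed

lemma width_le_iso:
  assumes width: "width_le k P" and iso: "ipom_iso Q P"
  shows "width_le k Q"
  unfolding width_le_def
proof (intro allI impI)
  fix A assume A: "A \<subseteq> ev Q" and antichain: "\<forall>x\<in>A. \<forall>y\<in>A. (x, y) \<notin> prec Q"
  obtain g where g: "ipom_iso_via Q P g" using iso ipom_iso_iff_via by blast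
  note g_props = ipom_iso_viaD[OF g]
  have inj: "inj_on g A"
    using g_props(1) A unfolding bij_betw_def by (blast intro: inj_on_subset)
  have "g ` A \<subseteq> ev P"
    using g_props(1) A unfolding bij_betw_def by blast
  moreover have "\<forall>x\<in>g ` A. \<forall>y\<in>g ` A. (x, y) \<notin> prec P"
    using g_props(2) antichain A by blast
  ultimately have "card (g ` A) \<le> k" using width unfolding width_le_def by blast
  then show "card A \<le> k" using card_image[OF inj] by simp
qed

lemma width_le_conc_of:
  assumes "width_le k P" "A \<subseteq> ev P" "\<forall>x\<in>A. \<forall>y\<in>A. (x, y) \<notin> prec P"
  shows "width_le k (conc_of P A)" "card A \<le> k"
  using assms unfolding width_le_def by (auto simp: subset_iff)

lemma iiPomsI: "wf_ipom P \<Longrightarrow> width_le k P \<Longrightarrow> cls P \<in> iiPoms k"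
  unfolding iiPoms_def by blast

lemma iiPoms_rep:
  assumes "X \<in> iiPoms k"
  shows "wf_ipom (rep X)" "width_le k (rep X)" "cls (rep X) = X"
proof -
  obtain P where P: "wf_ipom P" "width_le k P" "X = cls P"
    using assms unfolding iiPoms_def by blast
  have r: "wf_ipom (rep (cls P))" "ipom_iso P (rep (cls P))" using rep_cls[OF P(1)] by blast+
  show "wf_ipom (rep X)" using r P by simp
  show "cls (rep X) = X" using cls_rep_cls[OF P(1)] P by simp
  show "width_le k (rep X)" using width_le_iso[OF P(2) ipom_iso_sym[OF P(1) r(2)]] P by simp
qed

lemma pomS_in_iiObj:
  assumes "X \<in> iiPoms k"
  shows "pomS X \<in> iiObj k"
proof -
  note r = iiPoms_rep[OF assms]
  have "card (srcI (rep X)) \<le> k"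
    using width_le_conc_of(2)[OF r(2) wf_ipom_src_ev] wf_ipom_src_minimal r(1) by blast
  then show ?thesis
    using wf_src_conc[OF r(1)] unfolding iiObj_def pomS_def src_conc_def[symmetric]
    by (auto simp: src_conc_def is_conc_def)
qed

lemma pomT_in_iiObj:
  assumes "X \<in> iiPoms k"
  shows "pomT X \<in> iiObj k"
proof -
  note r = iiPoms_rep[OF assms]
  have "card (tgtI (rep X)) \<le> k"
    using width_le_conc_of(2)[OF r(2) wf_ipom_tgt_ev] wf_ipom_tgt_maximal r(1) by blast
  then show ?thesis
    using wf_tgt_conc[OF r(1)] unfolding iiObj_def pomT_def tgt_conc_def[symmetric]
    by (auto simp: tgt_conc_def is_conc_def)
qed

lemma pomT_in_iiPoms:
  assumes "X \<in> iiPoms k"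
  shows "pomT X \<in> iiPoms k"
proof -
  note r = iiPoms_rep[OF assms]
  have "width_le k (tgt_conc (rep X))"
    unfolding tgt_conc_def using width_le_conc_of(1)[OF r(2) wf_ipom_tgt_ev] wf_ipom_tgt_maximal r(1)
    by blast
  then show ?thesis
    unfolding pomT_def tgt_conc_def[symmetric] by (rule iiPomsI[OF wf_tgt_conc[OF r(1)]])
qed

lemma pomS_pomT:
  assumes "X \<in> iiPoms k"
  shows "pomS (pomT X) = pomT X"
  using pomS_cls[OF wf_tgt_conc[OF iiPoms_rep(1)[OF assms]]]
  unfolding pomT_def tgt_conc_def[symmetric] by simp

section \<open>Relations glued along injections\<close>

lemma trancl_map_prod_inj_on:
  assumes inj: "inj_on f S" and r: "r \<subseteq> S \<times> S" and xy: "(x, y) \<in> (map_prod f f ` r)\<^sup>+"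
  shows "\<exists>a b. x = f a \<and> y = f b \<and> a \<in> S \<and> b \<in> S \<and> (a, b) \<in> r\<^sup>+"
  using xy
proof (induction rule: trancl_induct)
  case (base y)
  then show ?case using r by auto
next
  case (step y z)
  then obtain a b where ab: "x = f a" "y = f b" "a \<in> S" "b \<in> S" "(a, b) \<in> r\<^sup>+" by blast
  obtain c d where cd: "(c, d) \<in> r" "y = f c" "z = f d" using step(2) by auto
  have "c = b" using inj ab cd r unfolding inj_on_def by blast
  then show ?case using ab cd r by (blast intro: trancl_into_trancl)
qed

lemma acyclic_map_prod_inj_on:
  assumes "inj_on f S" "r \<subseteq> S \<times> S" "acyclic r"
  shows "acyclic (map_prod f f ` r)"
  using trancl_map_prod_inj_on[OF assms(1,2)] assms unfolding acyclic_def inj_on_def by metis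

text \<open>A path in the union switches between the two relations only inside the overlap, where both
  coincide with one total order; so it can be rerouted to switch at most once, and such a path
  is never a cycle.\<close>

lemma acyclic_Un_total_on_overlap:
  assumes acA: "acyclic rA" and acB: "acyclic rB"
    and subA: "rA \<subseteq> EA \<times> EA" and subB: "rB \<subseteq> EB \<times> EB"
    and agree: "\<And>c d. c \<in> EA \<inter> EB \<Longrightarrow> d \<in> EA \<inter> EB \<Longrightarrow> (c, d) \<in> rA \<longleftrightarrow> (c, d) \<in> rB"
    and total: "\<And>c d. c \<in> EA \<inter> EB \<Longrightarrow> d \<in> EA \<inter> EB \<Longrightarrow> c \<noteq> d \<Longrightarrow> (c, d) \<in> rA \<or> (d, c) \<in> rA"
  shows "acyclic (rA \<union> rB)"
proof -
  have trA: "rA\<^sup>+ \<subseteq> EA \<times> EA" and trB: "rB\<^sup>+ \<subseteq> EB \<times> EB"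
    using subA subB by (simp_all add: trancl_subset_Sigma)
  have overlap: "(c, d) \<in> rA \<and> (c, d) \<in> rB"
    if "c \<in> EA \<inter> EB" "d \<in> EA \<inter> EB" "(c, d) \<in> rA\<^sup>+ \<union> rB\<^sup>+" for c d
  proof -
    have "c \<noteq> d" using that(3) acA acB unfolding acyclic_def by blast
    moreover have "(d, c) \<notin> rA"
      using that agree acA acB unfolding acyclic_def by (blast intro: trancl_into_trancl)
    ultimately show ?thesis using total agree that(1,2) by blast
  qed
  define one_switch where "one_switch = rA\<^sup>+ \<union> rB\<^sup>+ \<union> rA\<^sup>+ O rB\<^sup>+ \<union> rB\<^sup>+ O rA\<^sup>+"
  have one_switch_stepA: "(x, z) \<in> one_switch" if "(x, y) \<in> one_switch" "(y, z) \<in> rA" for x y z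
  proof -
    have "y \<in> EA" using that(2) subA by blast
    then show ?thesis
      using that overlap trA trB unfolding one_switch_def
      by (blast intro: trancl_into_trancl)
  qed
  have one_switch_stepB: "(x, z) \<in> one_switch" if "(x, y) \<in> one_switch" "(y, z) \<in> rB" for x y z
  proof -
    have "y \<in> EB" using that(2) subB by blast
    then show ?thesis
      using that overlap trA trB unfolding one_switch_def
      by (blast intro: trancl_into_trancl)
  qed
  have "(x, z) \<in> one_switch" if "(x, z) \<in> (rA \<union> rB)\<^sup>+" for x z
    using that
  proof (induction rule: trancl_induct)
    case (base z)
    then show ?case unfolding one_switch_def by blast
  next
    case (step y z)
    then show ?case using one_switch_stepA one_switch_stepB by blast
  qed
  moreover have "(x, x) \<notin> one_switch" for x
    using acA acB overlap trA trB unfolding one_switch_def acyclic_def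
    by (blast intro: trancl_into_trancl)
  ultimately show ?thesis unfolding acyclic_def by blast
qed

lemma map_prod_image_mem_iff:
  assumes "inj_on f S" "r \<subseteq> S \<times> S" "x \<in> S" "y \<in> S"
  shows "(f x, f y) \<in> map_prod f f ` r \<longleftrightarrow> (x, y) \<in> r"
proof -
  have "(x, y) \<in> S \<times> S" using assms(3,4) by simp
  from inj_on_image_mem_iff[OF map_prod_inj_on[OF assms(1,1)] this assms(2)] show ?thesis by simp
qed

lemma map_prod_image_iff: "(u, v) \<in> map_prod h h ` X \<longleftrightarrow> (\<exists>a b. (a, b) \<in> X \<and> u = h a \<and> v = h b)"
  by force

lemma rel_eq_map_prod_image:
  assumes "bij_betw \<phi> S S'" "r \<subseteq> S \<times> S" "r' \<subseteq> S' \<times> S'"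
    and "\<And>x y. x \<in> S \<Longrightarrow> y \<in> S \<Longrightarrow> (x, y) \<in> r \<longleftrightarrow> (\<phi> x, \<phi> y) \<in> r'"
  shows "r' = map_prod \<phi> \<phi> ` r"
proof
  show "map_prod \<phi> \<phi> ` r \<subseteq> r'" using assms(2,4) by auto
  show "r' \<subseteq> map_prod \<phi> \<phi> ` r"
  proof
    fix p assume p: "p \<in> r'"
    then obtain a b where "p = (\<phi> a, \<phi> b)" "a \<in> S" "b \<in> S"
      using assms(1,3) unfolding bij_betw_def by blast
    then show "p \<in> map_prod \<phi> \<phi> ` r" using p assms(4) by force
  qed
qed

section \<open>Gluings of representatives\<close>

definition glue_via :: "'a ipom \<Rightarrow> 'a ipom \<Rightarrow> 'a ipom \<Rightarrow> (nat \<Rightarrow> nat) \<Rightarrow> (nat \<Rightarrow> nat) \<Rightarrow> bool" where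
  "glue_via P Q R f g \<longleftrightarrow> inj_on f (ev P) \<and> inj_on g (ev Q) \<and>
     ev R = f ` ev P \<union> g ` ev Q \<and>
     f ` ev P \<inter> g ` ev Q = f ` tgtI P \<and> g ` srcI Q = f ` tgtI P \<and>
     (\<forall>x\<in>tgtI P. \<forall>x'\<in>tgtI P. \<forall>y\<in>srcI Q. \<forall>y'\<in>srcI Q.
        f x = g y \<longrightarrow> f x' = g y' \<longrightarrow> ((x, x') \<in> evo P \<longleftrightarrow> (y, y') \<in> evo Q)) \<and>
     prec R = map_prod f f ` prec P \<union> map_prod g g ` prec Q \<union>
              (f ` (ev P - tgtI P)) \<times> (g ` (ev Q - srcI Q)) \<and>
     evo R = map_prod f f ` evo P \<union> map_prod g g ` evo Q \<and>
     (\<forall>x\<in>ev P. lab R (f x) = lab P x) \<and> (\<forall>y\<in>ev Q. lab R (g y) = lab Q y) \<and>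
     srcI R = f ` srcI P \<and> tgtI R = g ` tgtI Q"

lemma is_glue_iff_glue_via: "is_glue P Q R \<longleftrightarrow> (\<exists>f g. glue_via P Q R f g)"
  unfolding is_glue_def glue_via_def by (rule refl)

locale ipom_gluing =
  fixes P Q R :: "'a ipom" and f g :: "nat \<Rightarrow> nat"
  assumes wf_left: "wf_ipom P" and wf_right: "wf_ipom Q" and glue_via: "glue_via P Q R f g"
begin

lemma
  shows inj_left: "inj_on f (ev P)" and inj_right: "inj_on g (ev Q)"
    and ev_glue: "ev R = f ` ev P \<union> g ` ev Q"
    and overlap: "f ` ev P \<inter> g ` ev Q = f ` tgtI P"
    and src_right_image: "g ` srcI Q = f ` tgtI P"
    and evo_agree: "\<And>x x' y y'. x \<in> tgtI P \<Longrightarrow> x' \<in> tgtI P \<Longrightarrow> y \<in> srcI Q \<Longrightarrow> y' \<in> srcI Q \<Longrightarrow>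
        f x = g y \<Longrightarrow> f x' = g y' \<Longrightarrow> (x, x') \<in> evo P \<longleftrightarrow> (y, y') \<in> evo Q"
    and prec_glue: "prec R = map_prod f f ` prec P \<union> map_prod g g ` prec Q \<union>
              (f ` (ev P - tgtI P)) \<times> (g ` (ev Q - srcI Q))"
    and evo_glue: "evo R = map_prod f f ` evo P \<union> map_prod g g ` evo Q"
    and lab_left: "\<And>x. x \<in> ev P \<Longrightarrow> lab R (f x) = lab P x"
    and lab_right: "\<And>y. y \<in> ev Q \<Longrightarrow> lab R (g y) = lab Q y"
    and src_glue: "srcI R = f ` srcI P" and tgt_glue: "tgtI R = g ` tgtI Q"
  using glue_via unfolding glue_via_def by simp_all

lemma left_eq_iff: "a \<in> ev P \<Longrightarrow> b \<in> ev P \<Longrightarrow> f a = f b \<longleftrightarrow> a = b"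
  using inj_left unfolding inj_on_def by blast

lemma right_eq_iff: "a \<in> ev Q \<Longrightarrow> b \<in> ev Q \<Longrightarrow> g a = g b \<longleftrightarrow> a = b"
  using inj_right unfolding inj_on_def by blast

lemma left_in_glue: "a \<in> ev P \<Longrightarrow> f a \<in> ev R"
  using ev_glue by blast

lemma right_in_glue: "b \<in> ev Q \<Longrightarrow> g b \<in> ev R"
  using ev_glue by blast

lemma shared_event:
  assumes a: "a \<in> ev P" and b: "b \<in> ev Q" and eq: "f a = g b"
  shows "a \<in> tgtI P" "b \<in> srcI Q"
proof -
  have "f a \<in> f ` tgtI P" using overlap a b eq by blast
  then show "a \<in> tgtI P" using left_eq_iff[OF a] wf_ipom_tgt_ev[OF wf_left] by blast
  then have "g b \<in> g ` srcI Q" using src_right_image eq by (metis image_eqI)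
  then show "b \<in> srcI Q" using right_eq_iff[OF b] wf_ipom_src_ev[OF wf_right] by blast
qed

lemma tgt_left_matched: "a \<in> tgtI P \<Longrightarrow> \<exists>b\<in>srcI Q. f a = g b"
  using src_right_image by (metis imageE imageI)

lemma src_right_matched: "b \<in> srcI Q \<Longrightarrow> \<exists>a\<in>tgtI P. g b = f a"
  using src_right_image by (metis imageE imageI)

lemma overlapE:
  assumes "c \<in> f ` ev P \<inter> g ` ev Q"
  obtains x y where "x \<in> tgtI P" "y \<in> srcI Q" "c = f x" "c = g y"
proof -
  obtain x where x: "x \<in> tgtI P" "c = f x" using assms overlap by auto
  moreover obtain y where "y \<in> srcI Q" "f x = g y" using tgt_left_matched[OF x(1)] by blast
  ultimately show thesis using that by simp
qed

lemma ev_glue_cases: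
  assumes "u \<in> ev R"
  obtains (left) a where "a \<in> ev P" "u = f a" | (right) b where "b \<in> ev Q" "u = g b"
  using assms ev_glue by blast

lemma prec_glue_cases:
  assumes "(u, v) \<in> prec R"
  obtains (left) a b where "(a, b) \<in> prec P" "u = f a" "v = f b"
    | (right) a b where "(a, b) \<in> prec Q" "u = g a" "v = g b"
    | (across) a b where "a \<in> ev P" "a \<notin> tgtI P" "b \<in> ev Q" "b \<notin> srcI Q" "u = f a" "v = g b"
  using assms unfolding prec_glue by blast

lemma evo_glue_cases:
  assumes "(u, v) \<in> evo R"
  obtains (left) a b where "(a, b) \<in> evo P" "u = f a" "v = f b"
    | (right) a b where "(a, b) \<in> evo Q" "u = g a" "v = g b"
  using assms unfolding evo_glue by blast

lemma prec_leftI: "(a, b) \<in> prec P \<Longrightarrow> (f a, f b) \<in> prec R"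
  unfolding prec_glue by blast

lemma prec_rightI: "(a, b) \<in> prec Q \<Longrightarrow> (g a, g b) \<in> prec R"
  unfolding prec_glue by blast

lemma prec_acrossI:
  "a \<in> ev P \<Longrightarrow> a \<notin> tgtI P \<Longrightarrow> b \<in> ev Q \<Longrightarrow> b \<notin> srcI Q \<Longrightarrow> (f a, g b) \<in> prec R"
  unfolding prec_glue by blast

lemma evo_leftI: "(a, b) \<in> evo P \<Longrightarrow> (f a, f b) \<in> evo R"
  unfolding evo_glue by blast

lemma evo_rightI: "(a, b) \<in> evo Q \<Longrightarrow> (g a, g b) \<in> evo R"
  unfolding evo_glue by blast

lemmas prec_left_ev = wf_ipom_prec_ev[OF wf_left]
lemmas prec_right_ev = wf_ipom_prec_ev[OF wf_right]
lemmas evo_left_ev = wf_ipom_evo_ev[OF wf_left]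
lemmas evo_right_ev = wf_ipom_evo_ev[OF wf_right]

lemma prec_leftD:
  assumes a: "a \<in> ev P" and b: "b \<in> ev P" and r: "(f a, f b) \<in> prec R"
  shows "(a, b) \<in> prec P"
  using r
proof (cases rule: prec_glue_cases)
  case (left c d)
  then show ?thesis using left_eq_iff a b prec_left_ev by metis
next
  case (right c d)
  then have "d \<in> srcI Q" using shared_event[OF b] prec_right_ev by metis
  then show ?thesis using right wf_ipom_src_minimal[OF wf_right] by blast
next
  case (across c d)
  then show ?thesis using shared_event[OF b] by metis
qed

lemma prec_rightD:
  assumes a: "a \<in> ev Q" and b: "b \<in> ev Q" and r: "(g a, g b) \<in> prec R"
  shows "(a, b) \<in> prec Q"
  using r
proof (cases rule: prec_glue_cases)
  case (left c d)
  then have "c \<in> tgtI P" using shared_event[OF _ a] prec_left_ev by metis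
  then show ?thesis using left wf_ipom_tgt_maximal[OF wf_left] by blast
next
  case (right c d)
  then show ?thesis using right_eq_iff a b prec_right_ev by metis
next
  case (across c d)
  then show ?thesis using shared_event[OF _ a] by metis
qed

lemma evo_leftD:
  assumes a: "a \<in> ev P" and b: "b \<in> ev P" and r: "(f a, f b) \<in> evo R"
  shows "(a, b) \<in> evo P"
  using r
proof (cases rule: evo_glue_cases)
  case (left c d)
  then show ?thesis using left_eq_iff a b evo_left_ev by metis
next
  case (right c d)
  then have "c \<in> ev Q" "d \<in> ev Q" using evo_right_ev by auto
  then show ?thesis using shared_event[OF a] shared_event[OF b] evo_agree right by metis
qed

lemma evo_rightD:
  assumes a: "a \<in> ev Q" and b: "b \<in> ev Q" and r: "(g a, g b) \<in> evo R"
  shows "(a, b) \<in> evo Q"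
  using r
proof (cases rule: evo_glue_cases)
  case (left c d)
  then have "c \<in> ev P" "d \<in> ev P" using evo_left_ev by auto
  then show ?thesis using shared_event[OF _ a] shared_event[OF _ b] evo_agree left by metis
next
  case (right c d)
  then show ?thesis using right_eq_iff a b evo_right_ev by metis
qed

lemma prec_glue_irrefl: "(u, u) \<notin> prec R"
proof
  assume "(u, u) \<in> prec R"
  then show False
  proof (cases rule: prec_glue_cases)
    case (left a b)
    then show False using left_eq_iff prec_left_ev wf_ipom_prec_irrefl[OF wf_left] by metis
  next
    case (right a b)
    then show False using right_eq_iff prec_right_ev wf_ipom_prec_irrefl[OF wf_right] by metis
  next
    case (across a b)
    then show False using shared_event by metis
  qed
qed

lemma prec_left_not_tgt: "(a, b) \<in> prec P \<Longrightarrow> a \<in> ev P \<and> a \<notin> tgtI P"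
  using prec_left_ev wf_ipom_tgt_maximal[OF wf_left] by blast

lemma prec_right_not_src: "(a, b) \<in> prec Q \<Longrightarrow> b \<in> ev Q \<and> b \<notin> srcI Q"
  using prec_right_ev wf_ipom_src_minimal[OF wf_right] by blast

lemma prec_glue_trans:
  assumes uv: "(u, v) \<in> prec R" and vw: "(v, w) \<in> prec R"
  shows "(u, w) \<in> prec R"
  using uv
proof (cases rule: prec_glue_cases)
  case (left a b)
  from vw show ?thesis
  proof (cases rule: prec_glue_cases)
    case (left c d)
    then show ?thesis
      using \<open>(a, b) \<in> prec P\<close> \<open>u = f a\<close> \<open>v = f b\<close> left_eq_iff prec_left_ev
        wf_ipom_prec_trans[OF wf_left] prec_leftI by metis
  qed (use left prec_left_not_tgt prec_right_not_src prec_acrossI in metis)+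
next
  case (right a b)
  from vw show ?thesis
  proof (cases rule: prec_glue_cases)
    case (right c d)
    then show ?thesis
      using \<open>(a, b) \<in> prec Q\<close> \<open>u = g a\<close> \<open>v = g b\<close> right_eq_iff prec_right_ev
        wf_ipom_prec_trans[OF wf_right] prec_rightI by metis
  qed (use right prec_left_ev prec_right_not_src shared_event in metis)+
next
  case (across a b)
  from vw show ?thesis
  proof (cases rule: prec_glue_cases)
    case (right c d)
    then show ?thesis using across right_eq_iff prec_right_not_src prec_acrossI by metis
  qed (use across prec_left_ev shared_event in metis)+
qed

lemma prec_glue_interval:
  assumes wx: "(w, x) \<in> prec R" and yz: "(y, z) \<in> prec R"
  shows "(w, z) \<in> prec R \<or> (y, x) \<in> prec R"
  using wx
proof (cases rule: prec_glue_cases)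
  case (left a b)
  from yz show ?thesis
  proof (cases rule: prec_glue_cases)
    case (left c d)
    then show ?thesis
      using \<open>(a, b) \<in> prec P\<close> \<open>w = f a\<close> \<open>x = f b\<close> wf_ipom_interval[OF wf_left] prec_leftI by metis
  qed (use left prec_left_not_tgt prec_right_not_src prec_acrossI in metis)+
next
  case (right a b)
  from yz show ?thesis
  proof (cases rule: prec_glue_cases)
    case (right c d)
    then show ?thesis
      using \<open>(a, b) \<in> prec Q\<close> \<open>w = g a\<close> \<open>x = g b\<close> wf_ipom_interval[OF wf_right] prec_rightI by metis
  qed (use right prec_left_not_tgt prec_right_not_src prec_acrossI in metis)+
next
  case (across a b)
  from yz show ?thesis
    by (cases rule: prec_glue_cases) (use across prec_left_not_tgt prec_right_not_src prec_acrossI in metis)+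
qed

lemma evo_glue_not_prec:
  assumes "(u, v) \<in> evo R"
  shows "(u, v) \<notin> prec R \<and> (v, u) \<notin> prec R"
  using assms
proof (cases rule: evo_glue_cases)
  case (left a b)
  then show ?thesis using wf_ipom_evo_not_prec[OF wf_left] evo_left_ev prec_leftD by metis
next
  case (right a b)
  then show ?thesis using wf_ipom_evo_not_prec[OF wf_right] evo_right_ev prec_rightD by metis
qed

lemma glue_connex:
  assumes u: "u \<in> ev R" and v: "v \<in> ev R" and ne: "u \<noteq> v"
  shows "(u, v) \<in> prec R \<or> (v, u) \<in> prec R \<or> (u, v) \<in> evo R \<or> (v, u) \<in> evo R"
proof -
  define comparable where
    "comparable x y \<longleftrightarrow> (x, y) \<in> prec R \<or> (y, x) \<in> prec R \<or> (x, y) \<in> evo R \<or> (y, x) \<in> evo R"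
    for x y
  have comparable_sym: "comparable x y \<longleftrightarrow> comparable y x" for x y
    unfolding comparable_def by blast
  have left: "comparable (f a) (f b)" if "a \<in> ev P" "b \<in> ev P" "f a \<noteq> f b" for a b
    using wf_ipom_connex[OF wf_left that(1,2)] that(3) prec_leftI evo_leftI
    unfolding comparable_def by blast
  have right: "comparable (g a) (g b)" if "a \<in> ev Q" "b \<in> ev Q" "g a \<noteq> g b" for a b
    using wf_ipom_connex[OF wf_right that(1,2)] that(3) prec_rightI evo_rightI
    unfolding comparable_def by blast
  have across: "comparable (f a) (g b)" if a: "a \<in> ev P" and b: "b \<in> ev Q" and ne: "f a \<noteq> g b" for a b
  proof (cases "a \<in> tgtI P")
    case True
    then obtain a' where "a' \<in> srcI Q" "f a = g a'" using tgt_left_matched by blast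
    then show ?thesis using right[of a' b] b ne wf_ipom_src_ev[OF wf_right] by auto
  next
    case a_inner: False
    show ?thesis
    proof (cases "b \<in> srcI Q")
      case True
      then obtain b' where "b' \<in> tgtI P" "g b = f b'" using src_right_matched by blast
      then show ?thesis using left[of a b'] a ne wf_ipom_tgt_ev[OF wf_left] by auto
    next
      case False
      then show ?thesis using prec_acrossI[OF a a_inner b] unfolding comparable_def by blast
    qed
  qed
  from u v ne have "comparable u v"
    by (elim ev_glue_cases) (auto intro: left right across simp: comparable_sym)
  then show ?thesis unfolding comparable_def .
qed

lemma src_glue_minimal:
  assumes x: "x \<in> srcI R"
  shows "(y, x) \<notin> prec R"
proof
  assume yx: "(y, x) \<in> prec R"
  obtain a where a: "a \<in> srcI P" "x = f a" using x src_glue by blast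
  have a_ev: "a \<in> ev P" using a wf_ipom_src_ev[OF wf_left] by blast
  from yx show False
  proof (cases rule: prec_glue_cases)
    case (left c d)
    then show False using a a_ev left_eq_iff prec_left_ev wf_ipom_src_minimal[OF wf_left] by metis
  next
    case (right c d)
    then show False
      using shared_event(2)[OF a_ev] a prec_right_ev wf_ipom_src_minimal[OF wf_right] by metis
  next
    case (across c d)
    then show False using shared_event(2)[OF a_ev] a by metis
  qed
qed

lemma tgt_glue_maximal:
  assumes x: "x \<in> tgtI R"
  shows "(x, y) \<notin> prec R"
proof
  assume xy: "(x, y) \<in> prec R"
  obtain b where b: "b \<in> tgtI Q" "x = g b" using x tgt_glue by blast
  have b_ev: "b \<in> ev Q" using b wf_ipom_tgt_ev[OF wf_right] by blast
  from xy show False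
  proof (cases rule: prec_glue_cases)
    case (left c d)
    then show False
      using shared_event(1)[OF _ b_ev] b prec_left_ev wf_ipom_tgt_maximal[OF wf_left] by metis
  next
    case (right c d)
    then show False using b b_ev right_eq_iff prec_right_ev wf_ipom_tgt_maximal[OF wf_right] by metis
  next
    case (across c d)
    then show False using shared_event(1)[OF _ b_ev] b by metis
  qed
qed

lemma evo_left_image_iff:
  "x \<in> ev P \<Longrightarrow> x' \<in> ev P \<Longrightarrow> (f x, f x') \<in> map_prod f f ` evo P \<longleftrightarrow> (x, x') \<in> evo P"
  by (rule map_prod_image_mem_iff[OF inj_left]) (auto dest: evo_left_ev)

lemma evo_right_image_iff:
  "y \<in> ev Q \<Longrightarrow> y' \<in> ev Q \<Longrightarrow> (g y, g y') \<in> map_prod g g ` evo Q \<longleftrightarrow> (y, y') \<in> evo Q"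
  by (rule map_prod_image_mem_iff[OF inj_right]) (auto dest: evo_right_ev)

lemma evo_images_agree_on_overlap:
  assumes c: "c \<in> f ` ev P \<inter> g ` ev Q" and d: "d \<in> f ` ev P \<inter> g ` ev Q"
  shows "(c, d) \<in> map_prod f f ` evo P \<longleftrightarrow> (c, d) \<in> map_prod g g ` evo Q"
proof -
  obtain x y where xy: "x \<in> tgtI P" "y \<in> srcI Q" "c = f x" "c = g y"
    using c by (rule overlapE)
  obtain x' y' where xy': "x' \<in> tgtI P" "y' \<in> srcI Q" "d = f x'" "d = g y'"
    using d by (rule overlapE)
  have ev: "x \<in> ev P" "x' \<in> ev P" "y \<in> ev Q" "y' \<in> ev Q"
    using xy xy' wf_ipom_tgt_ev[OF wf_left] wf_ipom_src_ev[OF wf_right] by auto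
  have "(c, d) \<in> map_prod f f ` evo P \<longleftrightarrow> (x, x') \<in> evo P"
    using evo_left_image_iff[OF ev(1,2)] xy(3) xy'(3) by simp
  also have "\<dots> \<longleftrightarrow> (y, y') \<in> evo Q"
    using evo_agree[OF xy(1) xy'(1) xy(2) xy'(2)] xy xy' by simp
  also have "\<dots> \<longleftrightarrow> (c, d) \<in> map_prod g g ` evo Q"
    using evo_right_image_iff[OF ev(3,4)] xy(4) xy'(4) by simp
  finally show ?thesis .
qed

lemma evo_image_total_on_overlap:
  assumes c: "c \<in> f ` ev P \<inter> g ` ev Q" and d: "d \<in> f ` ev P \<inter> g ` ev Q" and "c \<noteq> d"
  shows "(c, d) \<in> map_prod f f ` evo P \<or> (d, c) \<in> map_prod f f ` evo P"
proof -
  obtain x where x: "x \<in> tgtI P" "c = f x" using c by (rule overlapE)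
  obtain x' where x': "x' \<in> tgtI P" "d = f x'" using d by (rule overlapE)
  have ev: "x \<in> ev P" "x' \<in> ev P" using x x' wf_ipom_tgt_ev[OF wf_left] by auto
  have "x \<noteq> x'" using x x' \<open>c \<noteq> d\<close> by blast
  moreover have "(x, x') \<notin> prec P" "(x', x) \<notin> prec P"
    using x x' wf_ipom_tgt_maximal[OF wf_left] by auto
  ultimately have "(x, x') \<in> evo P \<or> (x', x) \<in> evo P"
    using wf_ipom_connex[OF wf_left ev] by blast
  then show ?thesis using evo_left_image_iff[OF ev] evo_left_image_iff[OF ev(2,1)] x x' by blast
qed

lemma evo_glue_acyclic: "acyclic (evo R)"
  unfolding evo_glue
proof (rule acyclic_Un_total_on_overlap[OF _ _ _ _ evo_images_agree_on_overlap
      evo_image_total_on_overlap])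
  have subP: "evo P \<subseteq> ev P \<times> ev P" and subQ: "evo Q \<subseteq> ev Q \<times> ev Q"
    by (auto dest: evo_left_ev evo_right_ev)
  show "acyclic (map_prod f f ` evo P)"
    by (rule acyclic_map_prod_inj_on[OF inj_left subP wf_ipom_evo_acyclic[OF wf_left]])
  show "acyclic (map_prod g g ` evo Q)"
    by (rule acyclic_map_prod_inj_on[OF inj_right subQ wf_ipom_evo_acyclic[OF wf_right]])
  show "map_prod f f ` evo P \<subseteq> f ` ev P \<times> f ` ev P" "map_prod g g ` evo Q \<subseteq> g ` ev Q \<times> g ` ev Q"
    using subP subQ by auto
qed

lemma wf_glue: "wf_ipom R"
proof -
  have "finite (ev R)"
    using ev_glue wf_ipom_finite[OF wf_left] wf_ipom_finite[OF wf_right] by simp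
  moreover have "prec R \<subseteq> ev R \<times> ev R"
    by (auto elim!: prec_glue_cases dest: prec_left_ev prec_right_ev intro: left_in_glue right_in_glue)
  moreover have "evo R \<subseteq> ev R \<times> ev R"
    by (auto elim!: evo_glue_cases dest: evo_left_ev evo_right_ev intro: left_in_glue right_in_glue)
  moreover have "srcI R \<subseteq> ev R" "tgtI R \<subseteq> ev R"
    using src_glue tgt_glue ev_glue wf_ipom_src_ev[OF wf_left] wf_ipom_tgt_ev[OF wf_right] by auto
  ultimately show ?thesis
    using prec_glue_irrefl prec_glue_trans prec_glue_interval evo_glue_acyclic evo_glue_not_prec
      glue_connex src_glue_minimal tgt_glue_maximal
    by (intro wf_ipomI)
qed

lemma width_le_glue:
  assumes width_left: "width_le k P" and width_right: "width_le k Q"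
  shows "width_le k R"
  unfolding width_le_def
proof (intro allI impI)
  fix A assume A: "A \<subseteq> ev R" and antichain: "\<forall>x\<in>A. \<forall>y\<in>A. (x, y) \<notin> prec R"
  have in_left: "card A \<le> k" if "A \<subseteq> f ` ev P"
  proof -
    define B where "B = {a \<in> ev P. f a \<in> A}"
    have "B \<subseteq> ev P" "\<forall>x\<in>B. \<forall>y\<in>B. (x, y) \<notin> prec P"
      using antichain prec_leftI unfolding B_def by blast+
    then have "card B \<le> k" using width_left unfolding width_le_def by blast
    moreover have "A = f ` B" using that unfolding B_def by blast
    moreover have "inj_on f B" using inj_on_subset[OF inj_left \<open>B \<subseteq> ev P\<close>] .
    ultimately show ?thesis by (simp add: card_image)
  qed
  have in_right: "card A \<le> k" if "A \<subseteq> g ` ev Q"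
  proof -
    define B where "B = {b \<in> ev Q. g b \<in> A}"
    have "B \<subseteq> ev Q" "\<forall>x\<in>B. \<forall>y\<in>B. (x, y) \<notin> prec Q"
      using antichain prec_rightI unfolding B_def by blast+
    then have "card B \<le> k" using width_right unfolding width_le_def by blast
    moreover have "A = g ` B" using that unfolding B_def by blast
    moreover have "inj_on g B" using inj_on_subset[OF inj_right \<open>B \<subseteq> ev Q\<close>] .
    ultimately show ?thesis by (simp add: card_image)
  qed
  have "A \<subseteq> f ` ev P \<or> A \<subseteq> g ` ev Q"
  proof (rule ccontr)
    assume "\<not> (A \<subseteq> f ` ev P \<or> A \<subseteq> g ` ev Q)"
    then obtain u v where u: "u \<in> A" "u \<notin> g ` ev Q" and v: "v \<in> A" "v \<notin> f ` ev P" by blast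
    obtain a where a: "a \<in> ev P" "u = f a" using u A ev_glue by blast
    obtain b where b: "b \<in> ev Q" "v = g b" using v A ev_glue by blast
    have "a \<notin> tgtI P"
      using a u tgt_left_matched wf_ipom_src_ev[OF wf_right] by blast
    moreover have "b \<notin> srcI Q"
      using b v src_right_matched wf_ipom_tgt_ev[OF wf_left] by blast
    ultimately have "(u, v) \<in> prec R" using prec_acrossI a b by simp
    then show False using antichain u v by blast
  qed
  then show "card A \<le> k" using in_left in_right by blast
qed

lemma ipom_iso_src_conc_glue: "ipom_iso (src_conc P) (src_conc R)"
proof -
  have src: "srcI P \<subseteq> ev P" by (rule wf_ipom_src_ev[OF wf_left])
  have "ipom_iso_via (conc_of P (srcI P)) (conc_of R (f ` srcI P)) f"
  proof (rule ipom_iso_via_conc_ofI)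
    show "inj_on f (srcI P)" using inj_on_subset[OF inj_left src] .
    show "(x, y) \<in> evo P \<longleftrightarrow> (f x, f y) \<in> evo R" if "x \<in> srcI P" "y \<in> srcI P" for x y
      using that src evo_leftI evo_leftD[of x y] by blast
    show "lab R (f x) = lab P x" if "x \<in> srcI P" for x
      using that src lab_left by blast
  qed
  then show ?thesis unfolding ipom_iso_iff_via src_conc_def src_glue by blast
qed

lemma ipom_iso_tgt_conc_glue: "ipom_iso (tgt_conc Q) (tgt_conc R)"
proof -
  have tgt: "tgtI Q \<subseteq> ev Q" by (rule wf_ipom_tgt_ev[OF wf_right])
  have "ipom_iso_via (conc_of Q (tgtI Q)) (conc_of R (g ` tgtI Q)) g"
  proof (rule ipom_iso_via_conc_ofI)
    show "inj_on g (tgtI Q)" using inj_on_subset[OF inj_right tgt] .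
    show "(x, y) \<in> evo Q \<longleftrightarrow> (g x, g y) \<in> evo R" if "x \<in> tgtI Q" "y \<in> tgtI Q" for x y
      using that tgt evo_rightI evo_rightD[of x y] by blast
    show "lab R (g x) = lab Q x" if "x \<in> tgtI Q" for x
      using that tgt lab_right by blast
  qed
  then show ?thesis unfolding ipom_iso_iff_via tgt_conc_def tgt_glue by blast
qed

end

section \<open>Existence and uniqueness of gluings\<close>

text \<open>Events of \<open>P\<close> are sent to even numbers and the events of \<open>Q\<close> outside its source to odd
  ones; the source of \<open>Q\<close> is identified with the target of \<open>P\<close> along \<open>m\<close>.\<close>

lemma glue_exists_along:
  assumes wf_left: "wf_ipom P" and wf_right: "wf_ipom Q"
    and m: "bij_betw m (srcI Q) (tgtI P)"
    and m_evo: "\<And>y y'. y \<in> srcI Q \<Longrightarrow> y' \<in> srcI Q \<Longrightarrow> (m y, m y') \<in> evo P \<longleftrightarrow> (y, y') \<in> evo Q"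
    and m_lab: "\<And>y. y \<in> srcI Q \<Longrightarrow> lab P (m y) = lab Q y"
  shows "\<exists>R f g. glue_via P Q R f g"
proof -
  have m_in: "m y \<in> tgtI P" if "y \<in> srcI Q" for y using m that by (rule bij_betw_apply)
  have m_eq_iff: "m y = m y' \<longleftrightarrow> y = y'" if "y \<in> srcI Q" "y' \<in> srcI Q" for y y'
    using m that unfolding bij_betw_def inj_on_def by blast
  define f :: "nat \<Rightarrow> nat" where "f a = 2 * a" for a
  define g :: "nat \<Rightarrow> nat" where "g y = (if y \<in> srcI Q then 2 * m y else 2 * y + 1)" for y
  define R where "R = \<lparr>ev = f ` ev P \<union> g ` ev Q,
     prec = map_prod f f ` prec P \<union> map_prod g g ` prec Q \<union> f ` (ev P - tgtI P) \<times> g ` (ev Q - srcI Q),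
     evo = map_prod f f ` evo P \<union> map_prod g g ` evo Q,
     lab = (\<lambda>z. if even z then lab P (z div 2) else lab Q (z div 2)),
     srcI = f ` srcI P, tgtI = g ` tgtI Q\<rparr>"
  have f_eq_g: "f a = g y \<longleftrightarrow> y \<in> srcI Q \<and> a = m y" for a y
    unfolding f_def g_def by (auto simp: mult_2 dest: arg_cong[of _ _ even])
  have inj_f: "inj_on f (ev P)" unfolding f_def by (simp add: inj_on_def)
  have inj_g: "inj_on g (ev Q)"
    unfolding inj_on_def g_def using m_eq_iff by (auto dest: arg_cong[of _ _ even])
  have g_src: "g ` srcI Q = f ` tgtI P"
  proof -
    have "g ` srcI Q = f ` m ` srcI Q" unfolding f_def g_def by (auto simp: image_image)
    then show ?thesis using m by (simp add: bij_betw_def)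
  qed
  have overlap: "f ` ev P \<inter> g ` ev Q = f ` tgtI P"
  proof
    show "f ` ev P \<inter> g ` ev Q \<subseteq> f ` tgtI P" by (auto simp: f_eq_g m_in)
    show "f ` tgtI P \<subseteq> f ` ev P \<inter> g ` ev Q"
      using g_src wf_ipom_tgt_ev[OF wf_left] wf_ipom_src_ev[OF wf_right] by blast
  qed
  have agree: "\<forall>x\<in>tgtI P. \<forall>x'\<in>tgtI P. \<forall>y\<in>srcI Q. \<forall>y'\<in>srcI Q.
        f x = g y \<longrightarrow> f x' = g y' \<longrightarrow> ((x, x') \<in> evo P \<longleftrightarrow> (y, y') \<in> evo Q)"
    using m_evo by (simp add: f_eq_g)
  have lab_g: "lab R (g y) = lab Q y" if "y \<in> ev Q" for y
    using m_lab unfolding R_def g_def by simp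
  have "glue_via P Q R f g"
    unfolding glue_via_def using inj_f inj_g overlap g_src agree lab_g
    by (simp add: R_def f_def)
  then show ?thesis by blast
qed

lemma glue_exists:
  assumes wf_left: "wf_ipom P" and wf_right: "wf_ipom Q"
    and match: "ipom_iso (tgt_conc P) (src_conc Q)"
  shows "\<exists>R f g. glue_via P Q R f g"
proof -
  obtain m where m: "ipom_iso_via (src_conc Q) (tgt_conc P) m"
    using ipom_iso_sym[OF wf_tgt_conc[OF wf_left] match] ipom_iso_iff_via by blast
  note m_props = ipom_iso_viaD[OF m, unfolded src_conc_def tgt_conc_def conc_of_simps]
  show ?thesis
  proof (rule glue_exists_along[OF wf_left wf_right m_props(1)])
    show "(m y, m y') \<in> evo P \<longleftrightarrow> (y, y') \<in> evo Q" if "y \<in> srcI Q" "y' \<in> srcI Q" for y y'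
      using m_props(3)[OF that] bij_betw_apply[OF m_props(1)] that by blast
    show "lab P (m y) = lab Q y" if "y \<in> srcI Q" for y
      using m_props(4)[OF that] .
  qed
qed

text \<open>Within a conclist the event order is total, so an event is determined by the number of its
  predecessors. This rigidity makes the identification of \<open>T\<^sub>P\<close> with \<open>S\<^sub>Q\<close> in a gluing
  unique.\<close>

definition conc_rank :: "(nat \<times> nat) set \<Rightarrow> nat set \<Rightarrow> nat \<Rightarrow> nat" where
  "conc_rank r A x = card {y \<in> A. (y, x) \<in> r}"

lemma conc_rank_less:
  fixes P :: "'a ipom"
  assumes wf: "wf_ipom P" and A: "A \<subseteq> ev P" and antichain: "\<forall>x\<in>A. \<forall>y\<in>A. (x, y) \<notin> prec P"
    and x: "x \<in> A" and y: "y \<in> A" and xy: "(x, y) \<in> evo P"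
  shows "conc_rank (evo P) A x < conc_rank (evo P) A y"
proof -
  let ?below_x = "{z \<in> A. (z, x) \<in> evo P}" and ?below_y = "{z \<in> A. (z, y) \<in> evo P}"
  have "?below_x \<subseteq> ?below_y"
  proof
    fix z assume z: "z \<in> ?below_x"
    then have "z \<noteq> y" using xy wf_ipom_evo_no_2cycle[OF wf] by blast
    moreover have "(y, z) \<notin> evo P" using z xy wf_ipom_evo_no_3cycle[OF wf] by blast
    ultimately show "z \<in> ?below_y"
      using z y A antichain wf_ipom_connex[OF wf, of z y] by blast
  qed
  moreover have "x \<in> ?below_y" "x \<notin> ?below_x" using x xy wf_ipom_evo_irrefl[OF wf] by auto
  ultimately have "?below_x \<subset> ?below_y" by blast
  moreover have "finite ?below_y" using finite_subset[OF A wf_ipom_finite[OF wf]] by simp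
  ultimately show ?thesis unfolding conc_rank_def by (rule psubset_card_mono[rotated])
qed

lemma conc_rank_inj:
  fixes P :: "'a ipom"
  assumes wf: "wf_ipom P" and A: "A \<subseteq> ev P" and antichain: "\<forall>x\<in>A. \<forall>y\<in>A. (x, y) \<notin> prec P"
    and x: "x \<in> A" and y: "y \<in> A" and eq: "conc_rank (evo P) A x = conc_rank (evo P) A y"
  shows "x = y"
proof (rule ccontr)
  assume "x \<noteq> y"
  then have "(x, y) \<in> evo P \<or> (y, x) \<in> evo P"
    using wf_ipom_connex[OF wf, of x y] x y A antichain by blast
  then show False using conc_rank_less[OF wf A antichain x y] conc_rank_less[OF wf A antichain y x] eq
    by linarith
qed

context ipom_gluing
begin

lemma conc_rank_shared:
  assumes a: "a \<in> tgtI P" and b: "b \<in> srcI Q" and eq: "f a = g b"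
  shows "conc_rank (evo P) (tgtI P) a = conc_rank (evo Q) (srcI Q) b"
proof -
  let ?below_a = "{x \<in> tgtI P. (x, a) \<in> evo P}" and ?below_b = "{y \<in> srcI Q. (y, b) \<in> evo Q}"
  have images: "f ` ?below_a = g ` ?below_b"
  proof
    show "f ` ?below_a \<subseteq> g ` ?below_b"
    proof
      fix z assume "z \<in> f ` ?below_a"
      then obtain x where x: "x \<in> tgtI P" "(x, a) \<in> evo P" "z = f x" by blast
      obtain y where y: "y \<in> srcI Q" "f x = g y" using tgt_left_matched[OF x(1)] by blast
      have "(y, b) \<in> evo Q" using evo_agree[OF x(1) a y(1) b y(2) eq] x by blast
      then show "z \<in> g ` ?below_b" using x y by blast
    qed
    show "g ` ?below_b \<subseteq> f ` ?below_a"
    proof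
      fix z assume "z \<in> g ` ?below_b"
      then obtain y where y: "y \<in> srcI Q" "(y, b) \<in> evo Q" "z = g y" by blast
      obtain x where x: "x \<in> tgtI P" "g y = f x" using src_right_matched[OF y(1)] by blast
      have "(x, a) \<in> evo P" using evo_agree[OF x(1) a y(1) b _ eq] x y by simp
      then show "z \<in> f ` ?below_a" using x y by blast
    qed
  qed
  have "inj_on f ?below_a"
    by (rule inj_on_subset[OF inj_left]) (use wf_ipom_tgt_ev[OF wf_left] in blast)
  then have "card ?below_a = card (f ` ?below_a)" by (simp add: card_image)
  also have "\<dots> = card ?below_b"
    unfolding images by (rule card_image, rule inj_on_subset[OF inj_right])
      (use wf_ipom_src_ev[OF wf_right] in blast)
  finally show ?thesis unfolding conc_rank_def .
qed

end

locale ipom_gluing_pair =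
  first: ipom_gluing P Q R f g + second: ipom_gluing P Q R' f' g' for P Q R R' f g f' g'
begin

lemma matching_unique:
  assumes x: "x \<in> tgtI P" and y: "y \<in> srcI Q" and eq: "f x = g y"
  shows "f' x = g' y"
proof -
  obtain y' where y': "y' \<in> srcI Q" "f' x = g' y'" using second.tgt_left_matched[OF x] by blast
  have "conc_rank (evo Q) (srcI Q) y = conc_rank (evo Q) (srcI Q) y'"
    using first.conc_rank_shared[OF x y eq] second.conc_rank_shared[OF x y'] by simp
  moreover have "\<forall>x\<in>srcI Q. \<forall>y\<in>srcI Q. (x, y) \<notin> prec Q"
    using wf_ipom_src_minimal[OF first.wf_right] by blast
  ultimately have "y = y'"
    using conc_rank_inj[OF first.wf_right wf_ipom_src_ev[OF first.wf_right]] y y'(1) by blast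
  then show ?thesis using y' by simp
qed

definition transfer :: "nat \<Rightarrow> nat" where
  "transfer z = (if z \<in> f ` ev P then f' (inv_into (ev P) f z) else g' (inv_into (ev Q) g z))"

lemma transfer_left: "x \<in> ev P \<Longrightarrow> transfer (f x) = f' x"
  unfolding transfer_def using first.inj_left by simp

lemma transfer_right:
  assumes y: "y \<in> ev Q"
  shows "transfer (g y) = g' y"
proof (cases "g y \<in> f ` ev P")
  case True
  then obtain x where x: "x \<in> ev P" "g y = f x" by blast
  then have "f' x = g' y" using first.shared_event[OF x(1) y] by (intro matching_unique) simp_all
  then show ?thesis using transfer_left[OF x(1)] x by simp
next
  case False
  then show ?thesis unfolding transfer_def using first.inj_right y by simp
qed

lemma transfer_image: "transfer ` ev R = ev R'"
  unfolding first.ev_glue second.ev_glue image_Un image_image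
  using transfer_left transfer_right by simp

lemma transfer_prec:
  assumes "(u, v) \<in> prec R"
  shows "(transfer u, transfer v) \<in> prec R'"
  using assms
proof (cases rule: first.prec_glue_cases)
  case (left a b)
  then show ?thesis using first.prec_left_ev[OF left(1)] by (simp add: transfer_left second.prec_leftI)
next
  case (right a b)
  then show ?thesis using first.prec_right_ev[OF right(1)] by (simp add: transfer_right second.prec_rightI)
next
  case (across a b)
  then show ?thesis by (simp add: transfer_left transfer_right second.prec_acrossI)
qed

lemma transfer_evo:
  assumes "(u, v) \<in> evo R"
  shows "(transfer u, transfer v) \<in> evo R'"
  using assms
proof (cases rule: first.evo_glue_cases)
  case (left a b)
  then show ?thesis using first.evo_left_ev[OF left(1)] by (simp add: transfer_left second.evo_leftI)
next
  case (right a b)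
  then show ?thesis using first.evo_right_ev[OF right(1)] by (simp add: transfer_right second.evo_rightI)
qed

lemma transfer_lab: "z \<in> ev R \<Longrightarrow> lab R' (transfer z) = lab R z"
  by (erule first.ev_glue_cases)
    (simp_all add: transfer_left transfer_right first.lab_left first.lab_right
      second.lab_left second.lab_right)

lemma transfer_src: "transfer ` srcI R = srcI R'"
  unfolding first.src_glue second.src_glue image_image
  using transfer_left wf_ipom_src_ev[OF first.wf_left] by (auto intro!: image_cong)

lemma transfer_tgt: "transfer ` tgtI R = tgtI R'"
  unfolding first.tgt_glue second.tgt_glue image_image
  using transfer_right wf_ipom_tgt_ev[OF first.wf_right] by (auto intro!: image_cong)

end

lemma glue_unique:
  assumes first: "ipom_gluing P Q R f g" and second: "ipom_gluing P Q R' f' g'"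
  shows "ipom_iso R R'"
proof -
  interpret forward: ipom_gluing_pair P Q R R' f g f' g'
    using first second by (simp add: ipom_gluing_pair_def)
  interpret backward: ipom_gluing_pair P Q R' R f' g' f g
    using first second by (simp add: ipom_gluing_pair_def)
  let ?h = forward.transfer and ?h' = backward.transfer
  have backward_forward: "?h' (?h z) = z" if "z \<in> ev R" for z
    using that by (cases rule: forward.first.ev_glue_cases)
      (simp_all add: forward.transfer_left forward.transfer_right
        backward.transfer_left backward.transfer_right)
  have forward_backward: "?h (?h' z) = z" if "z \<in> ev R'" for z
    using that by (cases rule: forward.second.ev_glue_cases)
      (simp_all add: forward.transfer_left forward.transfer_right
        backward.transfer_left backward.transfer_right)
  have "bij_betw ?h (ev R) (ev R')"
  proof (rule bij_betw_byWitness[where f' = ?h'])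
    show "\<forall>z\<in>ev R. ?h' (?h z) = z" using backward_forward by blast
    show "\<forall>z\<in>ev R'. ?h (?h' z) = z" using forward_backward by blast
    show "?h ` ev R \<subseteq> ev R'" using forward.transfer_image by blast
    show "?h' ` ev R' \<subseteq> ev R" using backward.transfer_image by blast
  qed
  moreover have "(u, v) \<in> prec R \<longleftrightarrow> (?h u, ?h v) \<in> prec R'" if "u \<in> ev R" "v \<in> ev R" for u v
    using forward.transfer_prec backward.transfer_prec[of "?h u" "?h v"] backward_forward that
    by auto
  moreover have "(u, v) \<in> evo R \<longleftrightarrow> (?h u, ?h v) \<in> evo R'" if "u \<in> ev R" "v \<in> ev R" for u v
    using forward.transfer_evo backward.transfer_evo[of "?h u" "?h v"] backward_forward that
    by auto
  ultimately have "ipom_iso_via R R' ?h"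
    using forward.transfer_lab forward.transfer_src forward.transfer_tgt by (intro ipom_iso_viaI)
  then show ?thesis using ipom_iso_iff_via by blast
qed

lemma ipom_iso_via_images:
  assumes iso: "ipom_iso_via P P' \<phi>" and wf: "wf_ipom P" and wf': "wf_ipom P'"
  shows "inj_on \<phi> (ev P)" "ev P' = \<phi> ` ev P"
    "prec P' = map_prod \<phi> \<phi> ` prec P" "evo P' = map_prod \<phi> \<phi> ` evo P"
    "srcI P' = \<phi> ` srcI P" "tgtI P' = \<phi> ` tgtI P"
    "ev P' - srcI P' = \<phi> ` (ev P - srcI P)" "ev P' - tgtI P' = \<phi> ` (ev P - tgtI P)"
    "\<And>x. x \<in> ev P \<Longrightarrow> lab P' (\<phi> x) = lab P x"
proof -
  note iso_props = ipom_iso_viaD[OF iso]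
  show inj: "inj_on \<phi> (ev P)" and ev: "ev P' = \<phi> ` ev P"
    using iso_props(1) unfolding bij_betw_def by simp_all
  show "prec P' = map_prod \<phi> \<phi> ` prec P"
    by (rule rel_eq_map_prod_image[OF iso_props(1) _ _ iso_props(2)])
      (use wf_ipom_prec_ev[OF wf] wf_ipom_prec_ev[OF wf'] in auto)
  show "evo P' = map_prod \<phi> \<phi> ` evo P"
    by (rule rel_eq_map_prod_image[OF iso_props(1) _ _ iso_props(3)])
      (use wf_ipom_evo_ev[OF wf] wf_ipom_evo_ev[OF wf'] in auto)
  show "srcI P' = \<phi> ` srcI P" "tgtI P' = \<phi> ` tgtI P" using iso_props(5,6) by simp_all
  show "ev P' - srcI P' = \<phi> ` (ev P - srcI P)"
    using inj_on_image_set_diff[OF inj _ wf_ipom_src_ev[OF wf]] ev iso_props(5) by simp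
  show "ev P' - tgtI P' = \<phi> ` (ev P - tgtI P)"
    using inj_on_image_set_diff[OF inj _ wf_ipom_tgt_ev[OF wf]] ev iso_props(6) by simp
  show "\<And>x. x \<in> ev P \<Longrightarrow> lab P' (\<phi> x) = lab P x" by (rule iso_props(4))
qed

lemma glue_via_iso_inputs:
  assumes glue: "glue_via P' Q' R f g" and iso_left: "ipom_iso_via P P' \<phi>"
    and iso_right: "ipom_iso_via Q Q' \<psi>"
    and wf: "wf_ipom P" "wf_ipom P'" "wf_ipom Q" "wf_ipom Q'"
  shows "glue_via P Q R (f \<circ> \<phi>) (g \<circ> \<psi>)"
proof -
  interpret ipom_gluing P' Q' R f g using wf(2,4) glue by unfold_locales
  note p = ipom_iso_via_images[OF iso_left wf(1,2)]
  note q = ipom_iso_via_images[OF iso_right wf(3,4)]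
  have agree: "(x, x') \<in> evo P \<longleftrightarrow> (y, y') \<in> evo Q"
    if x: "x \<in> tgtI P" "x' \<in> tgtI P" and y: "y \<in> srcI Q" "y' \<in> srcI Q"
      and eq: "f (\<phi> x) = g (\<psi> y)" "f (\<phi> x') = g (\<psi> y')" for x x' y y'
  proof -
    have "x \<in> ev P" "x' \<in> ev P" "y \<in> ev Q" "y' \<in> ev Q"
      using x y wf_ipom_tgt_ev[OF wf(1)] wf_ipom_src_ev[OF wf(3)] by auto
    then show ?thesis
      using ipom_iso_viaD(3)[OF iso_left] ipom_iso_viaD(3)[OF iso_right]
        evo_agree[of "\<phi> x" "\<phi> x'" "\<psi> y" "\<psi> y'"] x y eq p(6) q(5) by auto
  qed
  show ?thesis
    unfolding glue_via_def
  proof (intro conjI)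
    show "inj_on (f \<circ> \<phi>) (ev P)" using comp_inj_on[OF p(1)] inj_left p(2) by simp
    show "inj_on (g \<circ> \<psi>) (ev Q)" using comp_inj_on[OF q(1)] inj_right q(2) by simp
  qed (use ev_glue overlap src_right_image agree prec_glue evo_glue lab_left lab_right
      src_glue tgt_glue p q in \<open>simp_all add: image_comp map_prod.comp\<close>)
qed

section \<open>Units and associativity of gluing\<close>

lemma glue_via_tgt_conc: "wf_ipom P \<Longrightarrow> glue_via P (tgt_conc P) P id id"
  using wf_ipom_tgt_ev[of P] unfolding glue_via_def tgt_conc_def by (auto simp: map_prod.id)

text \<open>For the associativity of gluing, start from \<open>W = (P * Q) * Z\<close> and cut out the part
  \<open>Q * Z\<close> of \<open>W\<close>; then \<open>W\<close> turns out to be a gluing of \<open>P\<close> with this part.\<close>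

locale ipom_gluing_assoc =
  inner: ipom_gluing P Q R f1 g1 + outer: ipom_gluing R Z W f2 g2 for P Q R Z W f1 g1 f2 g2
begin

definition QZ_ev :: "nat set" where
  "QZ_ev = f2 ` g1 ` ev Q \<union> g2 ` ev Z"

definition QZ :: "'a ipom" where
  "QZ = \<lparr>ev = QZ_ev, prec = prec W \<inter> QZ_ev \<times> QZ_ev, evo = evo W \<inter> QZ_ev \<times> QZ_ev, lab = lab W,
         srcI = f2 ` g1 ` srcI Q, tgtI = tgtI W\<rparr>"

lemma QZ_simps [simp]:
  "ev QZ = QZ_ev" "prec QZ = prec W \<inter> QZ_ev \<times> QZ_ev" "evo QZ = evo W \<inter> QZ_ev \<times> QZ_ev"
  "lab QZ = lab W" "srcI QZ = f2 ` g1 ` srcI Q" "tgtI QZ = tgtI W"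
  unfolding QZ_def by simp_all

lemma QZ_ev_outer_leftD:
  assumes r: "r \<in> ev R" and in_QZ: "f2 r \<in> QZ_ev"
  shows "\<exists>q\<in>ev Q. r = g1 q"
  using in_QZ unfolding QZ_ev_def
proof
  assume "f2 r \<in> f2 ` g1 ` ev Q"
  then show ?thesis using outer.left_eq_iff[OF r] inner.right_in_glue by blast
next
  assume "f2 r \<in> g2 ` ev Z"
  then have "r \<in> tgtI R" using outer.shared_event(1)[OF r] by blast
  then show ?thesis using inner.tgt_glue wf_ipom_tgt_ev[OF inner.wf_right] by blast
qed

lemma inner_right_tgt_iff: "q \<in> ev Q \<Longrightarrow> g1 q \<in> tgtI R \<longleftrightarrow> q \<in> tgtI Q"
  using inner.tgt_glue inner.right_eq_iff wf_ipom_tgt_ev[OF inner.wf_right] by blast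

lemma inj_on_QZ_left: "inj_on (f2 \<circ> g1) (ev Q)"
  using comp_inj_on[OF inner.inj_right inj_on_subset[OF outer.inj_left]] inner.ev_glue by blast

lemma inj_on_P_left: "inj_on (f2 \<circ> f1) (ev P)"
  using comp_inj_on[OF inner.inj_left inj_on_subset[OF outer.inj_left]] inner.ev_glue by blast

lemma QZ_ev_split: "QZ_ev = f2 ` g1 ` ev Q \<union> g2 ` (ev Z - srcI Z)"
proof -
  have "g2 ` srcI Z \<subseteq> f2 ` g1 ` ev Q"
    using outer.src_right_image inner.tgt_glue wf_ipom_tgt_ev[OF inner.wf_right] by auto
  then show ?thesis unfolding QZ_ev_def by blast
qed

lemma QZ_src_right_image: "g2 ` srcI Z = (f2 \<circ> g1) ` tgtI Q"
  using outer.src_right_image inner.tgt_glue by (simp add: image_comp)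

lemma QZ_overlap: "(f2 \<circ> g1) ` ev Q \<inter> g2 ` ev Z = (f2 \<circ> g1) ` tgtI Q"
proof
  show "(f2 \<circ> g1) ` ev Q \<inter> g2 ` ev Z \<subseteq> (f2 \<circ> g1) ` tgtI Q"
  proof
    fix z assume "z \<in> (f2 \<circ> g1) ` ev Q \<inter> g2 ` ev Z"
    then obtain q w where q: "q \<in> ev Q" "w \<in> ev Z" "z = f2 (g1 q)" "z = g2 w" by auto
    then have "g1 q \<in> tgtI R" using outer.shared_event(1)[OF inner.right_in_glue] by metis
    then show "z \<in> (f2 \<circ> g1) ` tgtI Q" using inner_right_tgt_iff q by auto
  qed
  have "(f2 \<circ> g1) ` tgtI Q \<subseteq> (f2 \<circ> g1) ` ev Q"
    by (rule image_mono[OF wf_ipom_tgt_ev[OF inner.wf_right]])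
  moreover have "(f2 \<circ> g1) ` tgtI Q \<subseteq> g2 ` ev Z"
    unfolding QZ_src_right_image[symmetric] by (rule image_mono[OF wf_ipom_src_ev[OF outer.wf_right]])
  ultimately show "(f2 \<circ> g1) ` tgtI Q \<subseteq> (f2 \<circ> g1) ` ev Q \<inter> g2 ` ev Z" by blast
qed

lemma QZ_evo_agree:
  assumes x: "x \<in> tgtI Q" "x' \<in> tgtI Q" and y: "y \<in> srcI Z" "y' \<in> srcI Z"
    and eq: "f2 (g1 x) = g2 y" "f2 (g1 x') = g2 y'"
  shows "(x, x') \<in> evo Q \<longleftrightarrow> (y, y') \<in> evo Z"
proof -
  have "x \<in> ev Q" "x' \<in> ev Q" using x wf_ipom_tgt_ev[OF inner.wf_right] by auto
  then have "(x, x') \<in> evo Q \<longleftrightarrow> (g1 x, g1 x') \<in> evo R"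
    using inner.evo_rightD inner.evo_rightI by blast
  moreover have "g1 x \<in> tgtI R" "g1 x' \<in> tgtI R" using inner.tgt_glue x by auto
  ultimately show ?thesis using outer.evo_agree y eq by blast
qed

lemma prec_QZ: "prec QZ = map_prod (f2 \<circ> g1) (f2 \<circ> g1) ` prec Q \<union> map_prod g2 g2 ` prec Z \<union>
    (f2 \<circ> g1) ` (ev Q - tgtI Q) \<times> g2 ` (ev Z - srcI Z)"
proof (rule antisym; rule subrelI)
  fix u v assume "(u, v) \<in> prec QZ"
  then have uv: "(u, v) \<in> prec W" "u \<in> QZ_ev" "v \<in> QZ_ev" by auto
  from uv(1) show "(u, v) \<in> map_prod (f2 \<circ> g1) (f2 \<circ> g1) ` prec Q \<union> map_prod g2 g2 ` prec Z \<union>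
      (f2 \<circ> g1) ` (ev Q - tgtI Q) \<times> g2 ` (ev Z - srcI Z)"
  proof (cases rule: outer.prec_glue_cases)
    case (left r r')
    obtain q q' where q: "q \<in> ev Q" "r = g1 q" and q': "q' \<in> ev Q" "r' = g1 q'"
      using QZ_ev_outer_leftD outer.prec_left_ev[OF left(1)] uv left by metis
    then have "(q, q') \<in> prec Q" using inner.prec_rightD left(1) by blast
    then show ?thesis using left q q' by (auto simp: map_prod_image_iff)
  next
    case (right w w')
    then show ?thesis by (auto simp: map_prod_image_iff)
  next
    case (across r w)
    obtain q where q: "q \<in> ev Q" "r = g1 q" using QZ_ev_outer_leftD across uv by metis
    then have "q \<notin> tgtI Q" using inner_right_tgt_iff across by blast
    then show ?thesis using across q by auto
  qed
next
  fix u v assume "(u, v) \<in> map_prod (f2 \<circ> g1) (f2 \<circ> g1) ` prec Q \<union> map_prod g2 g2 ` prec Z \<union>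
      (f2 \<circ> g1) ` (ev Q - tgtI Q) \<times> g2 ` (ev Z - srcI Z)"
  then consider (left) q q' where "(q, q') \<in> prec Q" "u = f2 (g1 q)" "v = f2 (g1 q')"
    | (right) w w' where "(w, w') \<in> prec Z" "u = g2 w" "v = g2 w'"
    | (across) q w where "q \<in> ev Q" "q \<notin> tgtI Q" "w \<in> ev Z" "w \<notin> srcI Z" "u = f2 (g1 q)" "v = g2 w"
    by (auto simp: map_prod_image_iff)
  then show "(u, v) \<in> prec QZ"
  proof cases
    case left
    then have "(u, v) \<in> prec W" using inner.prec_rightI outer.prec_leftI by simp
    moreover have "u \<in> QZ_ev" "v \<in> QZ_ev" using left inner.prec_right_ev unfolding QZ_ev_def by auto
    ultimately show ?thesis by simp
  next
    case right
    then have "(u, v) \<in> prec W" using outer.prec_rightI by simp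
    moreover have "u \<in> QZ_ev" "v \<in> QZ_ev" using right outer.prec_right_ev unfolding QZ_ev_def by auto
    ultimately show ?thesis by simp
  next
    case across
    then have "g1 q \<notin> tgtI R" using inner_right_tgt_iff by blast
    then have "(u, v) \<in> prec W" using across outer.prec_acrossI[OF inner.right_in_glue] by simp
    moreover have "u \<in> QZ_ev" "v \<in> QZ_ev" using across unfolding QZ_ev_def by auto
    ultimately show ?thesis by simp
  qed
qed

lemma evo_QZ: "evo QZ = map_prod (f2 \<circ> g1) (f2 \<circ> g1) ` evo Q \<union> map_prod g2 g2 ` evo Z"
proof (rule antisym; rule subrelI)
  fix u v assume "(u, v) \<in> evo QZ"
  then have uv: "(u, v) \<in> evo W" "u \<in> QZ_ev" "v \<in> QZ_ev" by auto
  from uv(1) show "(u, v) \<in> map_prod (f2 \<circ> g1) (f2 \<circ> g1) ` evo Q \<union> map_prod g2 g2 ` evo Z"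
  proof (cases rule: outer.evo_glue_cases)
    case (left r r')
    obtain q q' where q: "q \<in> ev Q" "r = g1 q" and q': "q' \<in> ev Q" "r' = g1 q'"
      using QZ_ev_outer_leftD outer.evo_left_ev[OF left(1)] uv left by metis
    then have "(q, q') \<in> evo Q" using inner.evo_rightD left(1) by blast
    then show ?thesis using left q q' by (auto simp: map_prod_image_iff)
  next
    case (right w w')
    then show ?thesis by (auto simp: map_prod_image_iff)
  qed
next
  fix u v assume "(u, v) \<in> map_prod (f2 \<circ> g1) (f2 \<circ> g1) ` evo Q \<union> map_prod g2 g2 ` evo Z"
  then consider (left) q q' where "(q, q') \<in> evo Q" "u = f2 (g1 q)" "v = f2 (g1 q')"
    | (right) w w' where "(w, w') \<in> evo Z" "u = g2 w" "v = g2 w'"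
    by (auto simp: map_prod_image_iff)
  then show "(u, v) \<in> evo QZ"
  proof cases
    case left
    then have "(u, v) \<in> evo W" using inner.evo_rightI outer.evo_leftI by simp
    moreover have "u \<in> QZ_ev" "v \<in> QZ_ev" using left inner.evo_right_ev unfolding QZ_ev_def by auto
    ultimately show ?thesis by simp
  next
    case right
    then have "(u, v) \<in> evo W" using outer.evo_rightI by simp
    moreover have "u \<in> QZ_ev" "v \<in> QZ_ev" using right outer.evo_right_ev unfolding QZ_ev_def by auto
    ultimately show ?thesis by simp
  qed
qed

lemma glue_via_QZ: "glue_via Q Z QZ (f2 \<circ> g1) g2"
  unfolding glue_via_def
proof (intro conjI)
  show "ev QZ = (f2 \<circ> g1) ` ev Q \<union> g2 ` ev Z" by (simp add: QZ_ev_def image_comp)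
  show "\<forall>x\<in>ev Q. lab QZ ((f2 \<circ> g1) x) = lab Q x"
    using inner.lab_right outer.lab_left inner.right_in_glue by simp
  show "\<forall>y\<in>ev Z. lab QZ (g2 y) = lab Z y" using outer.lab_right by simp
  show "srcI QZ = (f2 \<circ> g1) ` srcI Q" by (simp add: image_comp)
  show "tgtI QZ = g2 ` tgtI Z" by (simp add: outer.tgt_glue)
qed (use inj_on_QZ_left outer.inj_right QZ_overlap QZ_src_right_image QZ_evo_agree prec_QZ evo_QZ
    in auto)

lemma ev_W_split: "ev W = (f2 \<circ> f1) ` ev P \<union> QZ_ev"
  unfolding QZ_ev_def outer.ev_glue inner.ev_glue by (auto simp: image_comp)

lemma P_in_QZ_ev_iff:
  assumes a: "a \<in> ev P"
  shows "f2 (f1 a) \<in> QZ_ev \<longleftrightarrow> a \<in> tgtI P"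
proof
  assume "f2 (f1 a) \<in> QZ_ev"
  then obtain q where "q \<in> ev Q" "f1 a = g1 q"
    using QZ_ev_outer_leftD[OF inner.left_in_glue[OF a]] by blast
  then show "a \<in> tgtI P" using inner.shared_event(1)[OF a] by blast
next
  assume "a \<in> tgtI P"
  then obtain q where "q \<in> srcI Q" "f1 a = g1 q" using inner.tgt_left_matched by blast
  then show "f2 (f1 a) \<in> QZ_ev" using wf_ipom_src_ev[OF inner.wf_right] unfolding QZ_ev_def by auto
qed

lemma src_QZ: "srcI QZ = (f2 \<circ> f1) ` tgtI P"
  using inner.src_right_image by (simp add: image_comp)

lemma prec_W_left_iff:
  "a \<in> ev P \<Longrightarrow> b \<in> ev P \<Longrightarrow> (f2 (f1 a), f2 (f1 b)) \<in> prec W \<longleftrightarrow> (a, b) \<in> prec P"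
  using outer.prec_leftD[OF inner.left_in_glue inner.left_in_glue] inner.prec_leftD
    inner.prec_leftI outer.prec_leftI by blast

lemma prec_W_across:
  assumes a: "a \<in> ev P" "a \<notin> tgtI P" and v: "v \<in> QZ_ev" "v \<notin> srcI QZ"
  shows "(f2 (f1 a), v) \<in> prec W"
proof -
  have f1a: "f1 a \<in> ev R" "f1 a \<notin> tgtI R"
    using a inner.left_in_glue inner.tgt_glue inner.shared_event(1) wf_ipom_tgt_ev[OF inner.wf_right]
    by blast+
  from v consider (Q) q where "q \<in> ev Q" "v = f2 (g1 q)" | (Z) w where "w \<in> ev Z" "w \<notin> srcI Z" "v = g2 w"
    unfolding QZ_ev_split by blast
  then show ?thesis
  proof cases
    case Q
    then have "q \<notin> srcI Q" using v(2) by auto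
    then show ?thesis using Q inner.prec_acrossI[OF a] outer.prec_leftI by simp
  next
    case Z
    then show ?thesis using outer.prec_acrossI[OF f1a] by simp
  qed
qed

lemma not_prec_W_QZ_P:
  assumes u: "u \<in> QZ_ev" "u \<notin> (f2 \<circ> f1) ` ev P" and b: "b \<in> ev P"
  shows "(u, f2 (f1 b)) \<notin> prec W"
proof
  assume prec: "(u, f2 (f1 b)) \<in> prec W"
  have f1b: "f1 b \<in> ev R" using inner.left_in_glue[OF b] .
  from u(1) consider (Q) q where "q \<in> ev Q" "u = f2 (g1 q)" | (Z) w where "w \<in> ev Z" "w \<notin> srcI Z" "u = g2 w"
    unfolding QZ_ev_split by blast
  then show False
  proof cases
    case Q
    have q_inner: "q \<notin> srcI Q"
    proof
      assume "q \<in> srcI Q"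
      then obtain a where "a \<in> tgtI P" "g1 q = f1 a" using inner.src_right_matched by blast
      then show False using u(2) Q wf_ipom_tgt_ev[OF inner.wf_left] by auto
    qed
    have "(g1 q, f1 b) \<in> prec R"
      using prec Q outer.prec_leftD[OF inner.right_in_glue[OF Q(1)] f1b] by simp
    then show False
    proof (cases rule: inner.prec_glue_cases)
      case (left c d)
      then show False using inner.shared_event(2)[OF _ Q(1)] inner.prec_left_ev q_inner by metis
    next
      case (right c d)
      then have "d \<in> srcI Q" using inner.shared_event(2)[OF b] inner.prec_right_ev by metis
      then show False using right wf_ipom_src_minimal[OF inner.wf_right] by blast
    next
      case (across c d)
      then show False using inner.shared_event(2)[OF _ Q(1)] q_inner by metis
    qed
  next
    case Z
    from prec show False
    proof (cases rule: outer.prec_glue_cases)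
      case (left c d)
      then show False using outer.shared_event(2)[OF _ Z(1)] outer.prec_left_ev Z by metis
    next
      case (right c d)
      then have "d \<in> srcI Z" using outer.shared_event(2)[OF f1b] outer.prec_right_ev by metis
      then show False using right wf_ipom_src_minimal[OF outer.wf_right] by blast
    next
      case (across c d)
      then show False using outer.shared_event(2)[OF _ Z(1)] Z by metis
    qed
  qed
qed

lemma prec_W: "prec W = map_prod (f2 \<circ> f1) (f2 \<circ> f1) ` prec P \<union> map_prod id id ` prec QZ \<union>
    (f2 \<circ> f1) ` (ev P - tgtI P) \<times> id ` (ev QZ - srcI QZ)"
  (is "_ = ?rhs")
proof (rule antisym; rule subrelI)
  fix u v assume uv: "(u, v) \<in> prec W"
  have "u \<in> ev W" "v \<in> ev W" using outer.wf_glue uv wf_ipom_prec_ev by blast+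
  then have u: "u \<in> (f2 \<circ> f1) ` ev P \<or> u \<in> QZ_ev" and v: "v \<in> (f2 \<circ> f1) ` ev P \<or> v \<in> QZ_ev"
    unfolding ev_W_split by blast+
  show "(u, v) \<in> ?rhs"
  proof (cases "u \<in> QZ_ev \<and> v \<in> QZ_ev")
    case True
    then show ?thesis using uv by (simp add: map_prod.id)
  next
    case not_QZ: False
    show ?thesis
    proof (cases "u \<in> (f2 \<circ> f1) ` ev P")
      case True
      then obtain a where a: "a \<in> ev P" "u = f2 (f1 a)" by auto
      show ?thesis
      proof (cases "v \<in> (f2 \<circ> f1) ` ev P")
        case True
        then obtain b where b: "b \<in> ev P" "v = f2 (f1 b)" by auto
        then have "(a, b) \<in> prec P" using uv a prec_W_left_iff by blast
        then show ?thesis using a b by (auto simp: map_prod_image_iff)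
      next
        case False
        then have "v \<in> QZ_ev" "v \<notin> srcI QZ" "u \<notin> QZ_ev"
          using v not_QZ src_QZ wf_ipom_tgt_ev[OF inner.wf_left] by auto
        then show ?thesis using a P_in_QZ_ev_iff by auto
      qed
    next
      case False
      then have "u \<in> QZ_ev" "v \<notin> QZ_ev" using u not_QZ by auto
      then obtain b where "b \<in> ev P" "v = f2 (f1 b)" using v by auto
      then show ?thesis using uv not_prec_W_QZ_P \<open>u \<in> QZ_ev\<close> False by blast
    qed
  qed
next
  fix u v assume "(u, v) \<in> ?rhs"
  then show "(u, v) \<in> prec W"
    using prec_W_left_iff prec_W_across inner.prec_left_ev
    by (auto simp: map_prod_image_iff map_prod.id)
qed

lemma evo_W: "evo W = map_prod (f2 \<circ> f1) (f2 \<circ> f1) ` evo P \<union> map_prod id id ` evo QZ"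
proof (rule antisym; rule subrelI)
  fix u v assume uv: "(u, v) \<in> evo W"
  then show "(u, v) \<in> map_prod (f2 \<circ> f1) (f2 \<circ> f1) ` evo P \<union> map_prod id id ` evo QZ"
  proof (cases rule: outer.evo_glue_cases)
    case (left r r')
    from left(1) show ?thesis
    proof (cases rule: inner.evo_glue_cases)
      case (left a b)
      then show ?thesis using \<open>u = f2 r\<close> \<open>v = f2 r'\<close> by (auto simp: map_prod_image_iff)
    next
      case (right q q')
      then have "u \<in> QZ_ev" "v \<in> QZ_ev"
        using \<open>u = f2 r\<close> \<open>v = f2 r'\<close> inner.evo_right_ev unfolding QZ_ev_def by auto
      then show ?thesis using uv by (simp add: map_prod.id)
    qed
  next
    case (right w w')
    then have "u \<in> QZ_ev" "v \<in> QZ_ev" using outer.evo_right_ev unfolding QZ_ev_def by auto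
    then show ?thesis using uv by (simp add: map_prod.id)
  qed
next
  fix u v assume "(u, v) \<in> map_prod (f2 \<circ> f1) (f2 \<circ> f1) ` evo P \<union> map_prod id id ` evo QZ"
  then show "(u, v) \<in> evo W"
    using inner.evo_leftI outer.evo_leftI by (auto simp: map_prod_image_iff map_prod.id)
qed

lemma QZ_left_evo_agree:
  assumes x: "x \<in> tgtI P" "x' \<in> tgtI P" and y: "y \<in> srcI QZ" "y' \<in> srcI QZ"
    and eq: "f2 (f1 x) = y" "f2 (f1 x') = y'"
  shows "(x, x') \<in> evo P \<longleftrightarrow> (y, y') \<in> evo QZ"
proof -
  have x_ev: "x \<in> ev P" "x' \<in> ev P" using x wf_ipom_tgt_ev[OF inner.wf_left] by auto
  have "(x, x') \<in> evo P \<longleftrightarrow> (f1 x, f1 x') \<in> evo R"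
    using inner.evo_leftD[OF x_ev] inner.evo_leftI by blast
  also have "\<dots> \<longleftrightarrow> (f2 (f1 x), f2 (f1 x')) \<in> evo W"
    using outer.evo_leftD[OF inner.left_in_glue[OF x_ev(1)] inner.left_in_glue[OF x_ev(2)]]
      outer.evo_leftI by blast
  also have "\<dots> \<longleftrightarrow> (y, y') \<in> evo QZ"
    using eq x x_ev P_in_QZ_ev_iff by auto
  finally show ?thesis .
qed

lemma glue_via_P_QZ: "glue_via P QZ W (f2 \<circ> f1) id"
  unfolding glue_via_def
proof (intro conjI)
  show "inj_on (f2 \<circ> f1) (ev P)" "inj_on id (ev QZ)" using inj_on_P_left by simp_all
  show "ev W = (f2 \<circ> f1) ` ev P \<union> id ` ev QZ" using ev_W_split by simp
  show "(f2 \<circ> f1) ` ev P \<inter> id ` ev QZ = (f2 \<circ> f1) ` tgtI P"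
    using P_in_QZ_ev_iff wf_ipom_tgt_ev[OF inner.wf_left] by auto
  show "id ` srcI QZ = (f2 \<circ> f1) ` tgtI P" using src_QZ by simp
  show "\<forall>x\<in>tgtI P. \<forall>x'\<in>tgtI P. \<forall>y\<in>srcI QZ. \<forall>y'\<in>srcI QZ. (f2 \<circ> f1) x = id y \<longrightarrow>
      (f2 \<circ> f1) x' = id y' \<longrightarrow> ((x, x') \<in> evo P \<longleftrightarrow> (y, y') \<in> evo QZ)"
    using QZ_left_evo_agree by simp
  show "prec W = map_prod (f2 \<circ> f1) (f2 \<circ> f1) ` prec P \<union> map_prod id id ` prec QZ \<union>
      (f2 \<circ> f1) ` (ev P - tgtI P) \<times> id ` (ev QZ - srcI QZ)" by (rule prec_W)
  show "evo W = map_prod (f2 \<circ> f1) (f2 \<circ> f1) ` evo P \<union> map_prod id id ` evo QZ" by (rule evo_W)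
  show "\<forall>x\<in>ev P. lab W ((f2 \<circ> f1) x) = lab P x"
    using inner.lab_left outer.lab_left inner.left_in_glue by simp
  show "\<forall>y\<in>ev QZ. lab W (id y) = lab QZ y" by simp
  show "srcI W = (f2 \<circ> f1) ` srcI P" using outer.src_glue inner.src_glue by (simp add: image_comp)
  show "tgtI W = id ` tgtI QZ" by simp
qed

end

section \<open>Composition of pomsets\<close>

lemma glue_via_glue:
  assumes "wf_ipom P" "wf_ipom Q" "ipom_iso (tgt_conc P) (src_conc Q)"
  shows "\<exists>f g. glue_via P Q (glue P Q) f g"
proof -
  have "\<exists>R. is_glue P Q R" using glue_exists[OF assms] is_glue_iff_glue_via by blast
  then have "is_glue P Q (glue P Q)" unfolding glue_def by (rule someI_ex)
  then show ?thesis using is_glue_iff_glue_via by blast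
qed

lemma pcomp_cls:
  assumes wf_left: "wf_ipom P" and wf_right: "wf_ipom Q"
    and match: "ipom_iso (tgt_conc P) (src_conc Q)" and glue: "glue_via P Q R f g"
  shows "pcomp (cls P) (cls Q) = cls R"
proof -
  let ?P' = "rep (cls P)" and ?Q' = "rep (cls Q)"
  have rep_P: "wf_ipom ?P'" "ipom_iso P ?P'" and rep_Q: "wf_ipom ?Q'" "ipom_iso Q ?Q'"
    using rep_cls[OF wf_left] rep_cls[OF wf_right] by auto
  have "ipom_iso (tgt_conc ?P') (tgt_conc P)"
    using ipom_iso_sym[OF wf_tgt_conc[OF wf_left] ipom_iso_tgt_conc[OF wf_left rep_P(2)]] .
  moreover have "ipom_iso (src_conc Q) (src_conc ?Q')" using ipom_iso_src_conc[OF wf_right rep_Q(2)] .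
  ultimately have "ipom_iso (tgt_conc ?P') (src_conc ?Q')" using match ipom_iso_trans by blast
  then obtain f' g' where glue': "glue_via ?P' ?Q' (glue ?P' ?Q') f' g'"
    using glue_via_glue[OF rep_P(1) rep_Q(1)] by blast
  obtain \<phi> \<psi> where "ipom_iso_via P ?P' \<phi>" "ipom_iso_via Q ?Q' \<psi>"
    using rep_P(2) rep_Q(2) ipom_iso_iff_via by blast
  then have glue_rep: "glue_via P Q (glue ?P' ?Q') (f' \<circ> \<phi>) (g' \<circ> \<psi>)"
    using glue_via_iso_inputs[OF glue'] wf_left wf_right rep_P(1) rep_Q(1) by blast
  then have "ipom_iso R (glue ?P' ?Q')"
    using glue_unique ipom_gluing.intro[OF wf_left wf_right] glue by blast
  then have "cls R = cls (glue ?P' ?Q')"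
    using cls_eq_iff ipom_gluing.wf_glue ipom_gluing.intro[OF wf_left wf_right] glue glue_rep
    by blast
  then show ?thesis unfolding pcomp_def by simp
qed

lemma ipom_iso_tgt_src_rep:
  assumes "X \<in> iiPoms k" "Y \<in> iiPoms k" "pomS Y = pomT X"
  shows "ipom_iso (tgt_conc (rep X)) (src_conc (rep Y))"
proof -
  have "cls (tgt_conc (rep X)) = cls (src_conc (rep Y))"
    using assms(3) unfolding pomS_def pomT_def src_conc_def tgt_conc_def by simp
  then show ?thesis
    using cls_eq_iff wf_tgt_conc wf_src_conc iiPoms_rep(1) assms(1,2) by blast
qed

context
  fixes k :: nat and X Y :: "'a pom"
  assumes X: "X \<in> iiPoms k" and Y: "Y \<in> iiPoms k" and composable: "pomS Y = pomT X"
begin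

lemma pcomp_rep_glue:
  obtains R f g where "ipom_gluing (rep X) (rep Y) R f g" "pcomp X Y = cls R"
proof -
  note r = iiPoms_rep[OF X] and s = iiPoms_rep[OF Y]
  have match: "ipom_iso (tgt_conc (rep X)) (src_conc (rep Y))"
    by (rule ipom_iso_tgt_src_rep[OF X Y composable])
  obtain R f g where glue: "glue_via (rep X) (rep Y) R f g" using glue_exists[OF r(1) s(1) match] by blast
  then have "pcomp X Y = cls R" using pcomp_cls[OF r(1) s(1) match glue] r(3) s(3) by simp
  then show ?thesis using that ipom_gluing.intro[OF r(1) s(1) glue] by blast
qed

lemma pcomp_in_iiPoms: "pcomp X Y \<in> iiPoms k"
proof -
  obtain R f g where "ipom_gluing (rep X) (rep Y) R f g" "pcomp X Y = cls R" by (rule pcomp_rep_glue)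
  then show ?thesis
    using iiPomsI ipom_gluing.wf_glue ipom_gluing.width_le_glue iiPoms_rep(2)[OF X] iiPoms_rep(2)[OF Y]
    by metis
qed

lemma pomS_pcomp: "pomS (pcomp X Y) = pomS X"
proof -
  obtain R f g where gluing: "ipom_gluing (rep X) (rep Y) R f g" and eq: "pcomp X Y = cls R"
    by (rule pcomp_rep_glue)
  note wf = iiPoms_rep(1)[OF X] ipom_gluing.wf_glue[OF gluing]
  have "cls (src_conc R) = cls (src_conc (rep X))"
    using cls_eq_iff[OF wf_src_conc[OF wf(2)] wf_src_conc[OF wf(1)]]
      ipom_iso_sym[OF wf_src_conc[OF wf(1)] ipom_gluing.ipom_iso_src_conc_glue[OF gluing]] by blast
  then show ?thesis using eq pomS_cls wf iiPoms_rep(3)[OF X] by metis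
qed

lemma pomT_pcomp: "pomT (pcomp X Y) = pomT Y"
proof -
  obtain R f g where gluing: "ipom_gluing (rep X) (rep Y) R f g" and eq: "pcomp X Y = cls R"
    by (rule pcomp_rep_glue)
  note wf = iiPoms_rep(1)[OF Y] ipom_gluing.wf_glue[OF gluing]
  have "cls (tgt_conc R) = cls (tgt_conc (rep Y))"
    using cls_eq_iff[OF wf_tgt_conc[OF wf(2)] wf_tgt_conc[OF wf(1)]]
      ipom_iso_sym[OF wf_tgt_conc[OF wf(1)] ipom_gluing.ipom_iso_tgt_conc_glue[OF gluing]] by blast
  then show ?thesis using eq pomT_cls wf iiPoms_rep(3)[OF Y] by metis
qed

end

lemma pcomp_assoc:
  assumes X: "X \<in> iiPoms k" and Y: "Y \<in> iiPoms k" and Z: "Z \<in> iiPoms k"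
    and XY: "pomS Y = pomT X" and YZ: "pomS Z = pomT Y"
  shows "pcomp (pcomp X Y) Z = pcomp X (pcomp Y Z)"
proof -
  note r = iiPoms_rep[OF X] and s = iiPoms_rep[OF Y] and t = iiPoms_rep[OF Z]
  obtain R f1 g1 where inner: "ipom_gluing (rep X) (rep Y) R f1 g1" and XY_eq: "pcomp X Y = cls R"
    by (rule pcomp_rep_glue[OF X Y XY])
  have wf_R: "wf_ipom R" by (rule ipom_gluing.wf_glue[OF inner])
  have match_RZ: "ipom_iso (tgt_conc R) (src_conc (rep Z))"
    using ipom_iso_sym[OF wf_tgt_conc[OF s(1)] ipom_gluing.ipom_iso_tgt_conc_glue[OF inner]]
      ipom_iso_tgt_src_rep[OF Y Z YZ] ipom_iso_trans by blast
  obtain W f2 g2 where glue_W: "glue_via R (rep Z) W f2 g2"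
    using glue_exists[OF wf_R t(1) match_RZ] by blast
  interpret ipom_gluing_assoc "rep X" "rep Y" R "rep Z" W f1 g1 f2 g2
    using inner ipom_gluing.intro[OF wf_R t(1) glue_W] by (simp add: ipom_gluing_assoc_def)
  have "pcomp (pcomp X Y) Z = cls W"
    using pcomp_cls[OF wf_R t(1) match_RZ glue_W] XY_eq t(3) by simp
  moreover have "pcomp Y Z = cls QZ"
    using pcomp_cls[OF s(1) t(1) ipom_iso_tgt_src_rep[OF Y Z YZ] glue_via_QZ] s(3) t(3) by simp
  moreover have "pcomp X (cls QZ) = cls W"
  proof -
    have gluing_QZ: "ipom_gluing (rep Y) (rep Z) QZ (f2 \<circ> g1) g2"
      by (rule ipom_gluing.intro[OF s(1) t(1) glue_via_QZ])
    have "ipom_iso (tgt_conc (rep X)) (src_conc QZ)"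
      using ipom_iso_tgt_src_rep[OF X Y XY] ipom_gluing.ipom_iso_src_conc_glue[OF gluing_QZ]
        ipom_iso_trans by blast
    then show ?thesis
      using pcomp_cls[OF r(1) ipom_gluing.wf_glue[OF gluing_QZ] _ glue_via_P_QZ] r(3) by simp
  qed
  ultimately show ?thesis by simp
qed

lemma pcomp_pomT:
  assumes "X \<in> iiPoms k"
  shows "pcomp X (pomT X) = X"
proof -
  note r = iiPoms_rep[OF assms]
  have "ipom_iso (tgt_conc (rep X)) (src_conc (tgt_conc (rep X)))"
    by (simp add: ipom_iso_refl)
  then have "pcomp (cls (rep X)) (cls (tgt_conc (rep X))) = cls (rep X)"
    using pcomp_cls[OF r(1) wf_tgt_conc[OF r(1)] _ glue_via_tgt_conc[OF r(1)]] by blast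
  then show ?thesis unfolding pomT_def tgt_conc_def[symmetric] using r(3) by simp
qed

section \<open>The suffix module\<close>

lemma suff_src_res [simp]: "suff_src (res k L P) = pomS P"
  unfolding suff_src_def res_def by simp

lemma suff_tgt_res [simp]: "suff_tgt (res k L P) = pomT P"
  unfolding suff_tgt_def res_def by simp

lemma res_eq_iff:
  "res k L P1 = res k L P2 \<longleftrightarrow> pomS P1 = pomS P2 \<and> pomT P1 = pomT P2 \<and>
     (\<forall>Q\<in>iiPoms k. pomS Q = pomT P1 \<longrightarrow> (pcomp P1 Q \<in> L \<longleftrightarrow> pcomp P2 Q \<in> L))"
  unfolding res_def by auto

lemma res_pcomp_cong:
  assumes P1: "P1 \<in> iiPoms k" and P2: "P2 \<in> iiPoms k" and eq: "res k L P1 = res k L P2"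
    and A: "A \<in> iiPoms k" and composable: "pomS A = pomT P1"
  shows "res k L (pcomp P1 A) = res k L (pcomp P2 A)"
proof -
  have composable2: "pomS A = pomT P2" using composable eq by (simp add: res_eq_iff)
  have "pcomp (pcomp P1 A) Q \<in> L \<longleftrightarrow> pcomp (pcomp P2 A) Q \<in> L"
    if Q: "Q \<in> iiPoms k" "pomS Q = pomT A" for Q
  proof -
    have "pcomp A Q \<in> iiPoms k" "pomS (pcomp A Q) = pomT P1"
      using pcomp_in_iiPoms[OF A Q] pomS_pcomp[OF A Q] composable by simp_all
    then have "pcomp P1 (pcomp A Q) \<in> L \<longleftrightarrow> pcomp P2 (pcomp A Q) \<in> L"
      using eq by (simp add: res_eq_iff)
    then show ?thesis
      using pcomp_assoc[OF P1 A Q(1) composable Q(2)] pcomp_assoc[OF P2 A Q(1) composable2 Q(2)] by simp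
  qed
  then show ?thesis
    using eq pomS_pcomp[OF P1 A composable] pomS_pcomp[OF P2 A composable2]
      pomT_pcomp[OF P1 A composable] pomT_pcomp[OF P2 A composable2]
    by (simp add: res_eq_iff)
qed

text \<open>The action is defined through an arbitrary representative \<open>P\<close> of \<open>P \ L\<close>; by the
  previous lemma the choice does not matter.\<close>

lemma suff_act_res:
  assumes P: "P \<in> iiPoms k" and A: "A \<in> iiPoms k" and composable: "pomS A = pomT P"
  shows "suff_act k L (res k L P) A = res k L (pcomp P A)"
proof -
  let ?P' = "SOME P'. P' \<in> iiPoms k \<and> res k L P' = res k L P"
  have P': "?P' \<in> iiPoms k" "res k L ?P' = res k L P"
    using someI_ex[of "\<lambda>P'. P' \<in> iiPoms k \<and> res k L P' = res k L P"] P by blast+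
  then have "pomS A = pomT ?P'" using composable by (simp add: res_eq_iff)
  then show ?thesis
    unfolding suff_act_def using res_pcomp_cong[OF P'(1) P P'(2) A] by simp
qed

lemma suff_module:
  "module_over (iiObj k) (iiPoms k) pomS pomT pcomp idP (suff k L) suff_src suff_tgt (suff_act k L)"
  unfolding module_over_def
proof (intro conjI ballI impI)
  fix m assume "m \<in> suff k L"
  then obtain P where P: "P \<in> iiPoms k" "m = res k L P" unfolding suff_def by blast
  show "suff_src m \<in> iiObj k" "suff_tgt m \<in> iiObj k"
    using pomS_in_iiObj[OF P(1)] pomT_in_iiObj[OF P(1)] P(2) by simp_all
  show "suff_act k L m (idP (suff_tgt m)) = m"
    using suff_act_res[OF P(1) pomT_in_iiPoms[OF P(1)] pomS_pomT[OF P(1)]] pcomp_pomT[OF P(1)] P(2)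
    by (simp add: idP_def)
next
  fix m \<alpha> assume "m \<in> suff k L" and \<alpha>: "\<alpha> \<in> iiPoms k" and composable: "pomS \<alpha> = suff_tgt m"
  then obtain P where P: "P \<in> iiPoms k" "m = res k L P" unfolding suff_def by blast
  have composable': "pomS \<alpha> = pomT P" using composable P(2) by simp
  have act: "suff_act k L m \<alpha> = res k L (pcomp P \<alpha>)" using suff_act_res[OF P(1) \<alpha> composable'] P(2) by simp
  show "suff_act k L m \<alpha> \<in> suff k L"
    using act pcomp_in_iiPoms[OF P(1) \<alpha> composable'] unfolding suff_def by blast
  show "suff_src (suff_act k L m \<alpha>) = suff_src m" "suff_tgt (suff_act k L m \<alpha>) = pomT \<alpha>"
    using act pomS_pcomp[OF P(1) \<alpha> composable'] pomT_pcomp[OF P(1) \<alpha> composable'] P(2) by simp_all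
next
  fix m \<alpha> \<beta> assume "m \<in> suff k L" and \<alpha>: "\<alpha> \<in> iiPoms k" and \<beta>: "\<beta> \<in> iiPoms k"
    and composable: "pomS \<alpha> = suff_tgt m" and composable2: "pomS \<beta> = pomT \<alpha>"
  then obtain P where P: "P \<in> iiPoms k" "m = res k L P" unfolding suff_def by blast
  have composable': "pomS \<alpha> = pomT P" using composable P(2) by simp
  have "suff_act k L (suff_act k L m \<alpha>) \<beta> = res k L (pcomp (pcomp P \<alpha>) \<beta>)"
    using suff_act_res[OF P(1) \<alpha> composable'] P(2)
      suff_act_res[OF pcomp_in_iiPoms[OF P(1) \<alpha> composable'] \<beta>] composable2
      pomT_pcomp[OF P(1) \<alpha> composable'] by simp
  also have "\<dots> = res k L (pcomp P (pcomp \<alpha> \<beta>))"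
    using pcomp_assoc[OF P(1) \<alpha> \<beta> composable' composable2] by simp
  also have "\<dots> = suff_act k L m (pcomp \<alpha> \<beta>)"
    using suff_act_res[OF P(1) pcomp_in_iiPoms[OF \<alpha> \<beta> composable2]] P(2)
      pomS_pcomp[OF \<alpha> \<beta> composable2] composable' by simp
  finally show "suff_act k L (suff_act k L m \<alpha>) \<beta> = suff_act k L m (pcomp \<alpha> \<beta>)" .
qed

lemma res_module_hom:
  "module_hom (iiPoms k) pomS (iiPoms k) pomS pomT pcomp (suff k L) suff_src suff_tgt (suff_act k L)
     (res k L)"
  unfolding module_hom_def suff_def by (auto simp: suff_act_res)

lemma res_recognizes:
  assumes "L \<subseteq> iiPoms k"
  shows "L = {P \<in> iiPoms k. res k L P \<in> res k L ` L}"
proof (intro equalityI subsetI)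
  fix P assume "P \<in> {P \<in> iiPoms k. res k L P \<in> res k L ` L}"
  then obtain P0 where P: "P \<in> iiPoms k" and P0: "P0 \<in> L" and eq: "res k L P = res k L P0" by blast
  have P0_ii: "P0 \<in> iiPoms k" using P0 assms by blast
  have "pomT P0 \<in> iiPoms k" "pomS (pomT P0) = pomT P0" "pcomp P0 (pomT P0) \<in> L"
    using pomT_in_iiPoms[OF P0_ii] pomS_pomT[OF P0_ii] pcomp_pomT[OF P0_ii] P0 by simp_all
  then have "pcomp P (pomT P0) \<in> L" using eq by (simp add: res_eq_iff)
  moreover have "pomT P = pomT P0" using eq by (simp add: res_eq_iff)
  ultimately show "P \<in> L" using pcomp_pomT[OF P] by simp
qed (use assms in blast)

lemma res_eq_if_hom_eq:
  assumes hom: "module_hom (iiPoms k) pomS (iiPoms k) pomS pomT pcomp M s t act \<psi>"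
    and recognizes: "L = {P \<in> iiPoms k. \<psi> P \<in> K}"
    and P1: "P1 \<in> iiPoms k" and P2: "P2 \<in> iiPoms k" and eq: "\<psi> P1 = \<psi> P2"
  shows "res k L P1 = res k L P2"
proof -
  have st: "s (\<psi> P) = pomS P" "t (\<psi> P) = pomT P" if "P \<in> iiPoms k" for P
    using hom that unfolding module_hom_def by auto
  have act: "\<psi> (pcomp P \<alpha>) = act (\<psi> P) \<alpha>"
    if "P \<in> iiPoms k" "\<alpha> \<in> iiPoms k" "pomS \<alpha> = pomT P" for P \<alpha>
    using hom that unfolding module_hom_def by auto
  have T: "pomT P1 = pomT P2" using st(2)[OF P1] st(2)[OF P2] eq by simp
  have "pcomp P1 Q \<in> L \<longleftrightarrow> pcomp P2 Q \<in> L" if Q: "Q \<in> iiPoms k" "pomS Q = pomT P1" for Q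
    using act[OF P1 Q] act[OF P2 Q(1)] Q(2) T eq recognizes
      pcomp_in_iiPoms[OF P1 Q] pcomp_in_iiPoms[OF P2 Q(1)] by simp
  then show ?thesis using st[OF P1] st[OF P2] eq T by (simp add: res_eq_iff)
qed

lemma suff_minimal:
  assumes hom: "module_hom (iiPoms k) pomS (iiPoms k) pomS pomT pcomp M s t act \<psi>"
    and surj: "\<psi> ` iiPoms k = M" and KM: "K \<subseteq> M" and recognizes: "L = {P \<in> iiPoms k. \<psi> P \<in> K}"
  shows "\<exists>f. module_hom (iiPoms k) pomS M s t act (suff k L) suff_src suff_tgt (suff_act k L) f
      \<and> f ` M = suff k L \<and> f ` K = res k L ` L \<and> (\<forall>P\<in>iiPoms k. f (\<psi> P) = res k L P)"
proof -
  define f where "f m = res k L (SOME P. P \<in> iiPoms k \<and> \<psi> P = m)" for m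
  have f_\<psi>: "f (\<psi> P) = res k L P" if P: "P \<in> iiPoms k" for P
  proof -
    let ?P = "SOME P'. P' \<in> iiPoms k \<and> \<psi> P' = \<psi> P"
    have "?P \<in> iiPoms k" "\<psi> ?P = \<psi> P"
      using someI_ex[of "\<lambda>P'. P' \<in> iiPoms k \<and> \<psi> P' = \<psi> P"] P by blast+
    then show ?thesis unfolding f_def using res_eq_if_hom_eq[OF hom recognizes _ P] by blast
  qed
  have "module_hom (iiPoms k) pomS M s t act (suff k L) suff_src suff_tgt (suff_act k L) f"
    unfolding module_hom_def
  proof (intro conjI ballI impI)
    fix m assume "m \<in> M"
    then obtain P where P: "P \<in> iiPoms k" "m = \<psi> P" using surj by blast
    show "f m \<in> suff k L" "suff_src (f m) = s m" "suff_tgt (f m) = t m"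
      using f_\<psi>[OF P(1)] hom P unfolding module_hom_def suff_def by auto
  next
    fix m \<alpha> assume "m \<in> M" and \<alpha>: "\<alpha> \<in> iiPoms k" and composable: "pomS \<alpha> = t m"
    then obtain P where P: "P \<in> iiPoms k" "m = \<psi> P" using surj by blast
    have composable': "pomS \<alpha> = pomT P" using composable hom P unfolding module_hom_def by auto
    have "f (act m \<alpha>) = f (\<psi> (pcomp P \<alpha>))" using hom P \<alpha> composable' unfolding module_hom_def by auto
    also have "\<dots> = res k L (pcomp P \<alpha>)" using f_\<psi> pcomp_in_iiPoms[OF P(1) \<alpha> composable'] by blast
    also have "\<dots> = suff_act k L (f m) \<alpha>" using suff_act_res[OF P(1) \<alpha> composable'] f_\<psi> P by simp
    finally show "f (act m \<alpha>) = suff_act k L (f m) \<alpha>" .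
  qed
  moreover have "f ` M = suff k L"
    unfolding suff_def surj[symmetric] image_image using f_\<psi> by simp
  moreover have "f ` K = res k L ` L"
  proof -
    have L: "L \<subseteq> iiPoms k" using recognizes by blast
    have "K = \<psi> ` L" using KM surj recognizes by blast
    then have "f ` K = (\<lambda>P. f (\<psi> P)) ` L" by (simp add: image_image)
    also have "\<dots> = res k L ` L" using f_\<psi> L by (intro image_cong) auto
    finally show ?thesis .
  qed
  ultimately show ?thesis using f_\<psi> by blast
qed

theorem mainTheorem5:
  fixes k :: nat and L :: "('a::finite) pom set"
  assumes "L \<subseteq> iiPoms k"
  shows "module_over (iiObj k) (iiPoms k) pomS pomT pcomp idP
           (suff k L) suff_src suff_tgt (suff_act k L)
       \<and> module_hom (iiPoms k) pomS (iiPoms k) pomS pomT pcomp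
           (suff k L) suff_src suff_tgt (suff_act k L) (res k L)
       \<and> L = {P \<in> iiPoms k. res k L P \<in> res k L ` L}
       \<and> (\<forall>(M :: 'm set) (s :: 'm \<Rightarrow> 'a pom) (t :: 'm \<Rightarrow> 'a pom) (act :: 'm \<Rightarrow> 'a pom \<Rightarrow> 'm)
            (K :: 'm set) (\<psi> :: 'a pom \<Rightarrow> 'm).
            module_over (iiObj k) (iiPoms k) pomS pomT pcomp idP M s t act
            \<and> K \<subseteq> M
            \<and> module_hom (iiPoms k) pomS (iiPoms k) pomS pomT pcomp M s t act \<psi>
            \<and> \<psi> ` iiPoms k = M
            \<and> L = {P \<in> iiPoms k. \<psi> P \<in> K}
            \<longrightarrow> (\<exists>f. module_hom (iiPoms k) pomS M s t act
                        (suff k L) suff_src suff_tgt (suff_act k L) f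
                     \<and> f ` M = suff k L
                     \<and> f ` K = res k L ` L
                     \<and> (\<forall>P\<in>iiPoms k. f (\<psi> P) = res k L P)))"
proof (intro conjI allI impI)
  fix M :: "'m set" and s t :: "'m \<Rightarrow> 'a pom" and act :: "'m \<Rightarrow> 'a pom \<Rightarrow> 'm"
    and K :: "'m set" and \<psi> :: "'a pom \<Rightarrow> 'm"
  assume "module_over (iiObj k) (iiPoms k) pomS pomT pcomp idP M s t act \<and> K \<subseteq> M
      \<and> module_hom (iiPoms k) pomS (iiPoms k) pomS pomT pcomp M s t act \<psi>
      \<and> \<psi> ` iiPoms k = M \<and> L = {P \<in> iiPoms k. \<psi> P \<in> K}"
  then show "\<exists>f. module_hom (iiPoms k) pomS M s t act (suff k L) suff_src suff_tgt (suff_act k L) f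
      \<and> f ` M = suff k L \<and> f ` K = res k L ` L \<and> (\<forall>P\<in>iiPoms k. f (\<psi> P) = res k L P)"
    by (elim conjE) (rule suff_minimal)
qed (fact suff_module res_module_hom res_recognizes[OF assms])+

end
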